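(* Let $G$ be a compact Hausdorff topological group and $X$ a Hausdorff $G$-space. Suppose there are cohomology classes $z_1,\dots,z_k\in H^*_G(X\times X)$ such that $\triangle_G^*(z_i)=0\in H^*_G(X)$ for all $i$ and the product $z_1\cdots z_k$ is nonzero. Then $\mathbf{TC}_G(X)>k$.
   Context: $EG\to BG$ is a universal principal $G$-bundle, $X^h_G=EG\times_G X$ the homotopy orbit space, and $H^*_G(X)=H^*(X^h_G)$ Borel equivariant cohomology with coefficients in an arbitrary commutative ring. The diagonal $\triangle\colon X\to X\times X$ is equivariant ($X\times X$ with diagonal action) and induces $\triangle_G\colon X^h_G\to (X\times X)^h_G$. $\mathbf{TC}_G(X)$ is the least $k$ such that $X\times X$ is covered by $k$ $G$-invariant open sets $U_i$ each admitting a $G$-map $s\colon U_i\to X^I$ with $\pi s$ $G$-homotopic to the inclusion $U_i\hookrightarrow X\times X$ ($\infty$ if none), where $X^I$ is the path space (compact-open topology, action $(g\gamma)(t)=g\gamma(t)$), $\pi(\gamma)=(\gamma(0),\gamma(1))$, and $G$-homotopies are equivariant homotopies with trivial action on $I$. *)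

theory Defs
  imports "HOL-Analysis.Analysis" "HOL-Homology.Homology" "HOL-Library.Extended_Nat"
begin

record 'g tgroup =
  gtop :: "'g topology"
  gmult :: "'g \<Rightarrow> 'g \<Rightarrow> 'g"
  ginv :: "'g \<Rightarrow> 'g"
  gone :: "'g"

definition topological_group :: "('g, 'm) tgroup_scheme \<Rightarrow> bool" where
  "topological_group G \<longleftrightarrow>
     (\<forall>g\<in>topspace (gtop G). \<forall>h\<in>topspace (gtop G). gmult G g h \<in> topspace (gtop G)) \<and>
     (\<forall>g\<in>topspace (gtop G). \<forall>h\<in>topspace (gtop G). \<forall>k\<in>topspace (gtop G).
         gmult G (gmult G g h) k = gmult G g (gmult G h k)) \<and>
     gone G \<in> topspace (gtop G) \<and>
     (\<forall>g\<in>topspace (gtop G). gmult G (gone G) g = g \<and> gmult G g (gone G) = g) \<and>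
     (\<forall>g\<in>topspace (gtop G). ginv G g \<in> topspace (gtop G) \<and>
         gmult G (ginv G g) g = gone G \<and> gmult G g (ginv G g) = gone G) \<and>
     continuous_map (prod_topology (gtop G) (gtop G)) (gtop G) (\<lambda>(g, h). gmult G g h) \<and>
     continuous_map (gtop G) (gtop G) (ginv G)"

definition gspace :: "('g, 'm) tgroup_scheme \<Rightarrow> 'x topology \<Rightarrow> ('g \<Rightarrow> 'x \<Rightarrow> 'x) \<Rightarrow> bool" where
  "gspace G X a \<longleftrightarrow>
     continuous_map (prod_topology (gtop G) X) X (\<lambda>(g, x). a g x) \<and>
     (\<forall>x\<in>topspace X. a (gone G) x = x) \<and>
     (\<forall>g\<in>topspace (gtop G). \<forall>h\<in>topspace (gtop G). \<forall>x\<in>topspace X.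
         a (gmult G g h) x = a g (a h x))"

definition prod_act :: "('g \<Rightarrow> 'x \<Rightarrow> 'x) \<Rightarrow> ('g \<Rightarrow> 'y \<Rightarrow> 'y) \<Rightarrow> 'g \<Rightarrow> 'x \<times> 'y \<Rightarrow> 'x \<times> 'y" where
  "prod_act a b g p = (a g (fst p), b g (snd p))"

definition g_invariant :: "('g, 'm) tgroup_scheme \<Rightarrow> ('g \<Rightarrow> 'x \<Rightarrow> 'x) \<Rightarrow> 'x set \<Rightarrow> bool" where
  "g_invariant G a U \<longleftrightarrow> (\<forall>g\<in>topspace (gtop G). \<forall>u\<in>U. a g u \<in> U)"

definition g_equivariant_on ::
  "('g, 'm) tgroup_scheme \<Rightarrow> 'x set \<Rightarrow> ('g \<Rightarrow> 'x \<Rightarrow> 'x) \<Rightarrow> ('g \<Rightarrow> 'y \<Rightarrow> 'y) \<Rightarrow> ('x \<Rightarrow> 'y) \<Rightarrow> bool" where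
  "g_equivariant_on G U a b f \<longleftrightarrow> (\<forall>g\<in>topspace (gtop G). \<forall>u\<in>U. f (a g u) = b g (f u))"

text \<open>Total space EG of a universal principal G-bundle EG -> BG = EG/G: a contractible
  G-space on which G acts freely with local trivialisations (an equivariant map
  \<phi> : V -> G on a G-invariant open neighbourhood V of each point gives
  V \<cong> (V/G) \<times> G over V/G).\<close>
definition universal_G_space :: "('g, 'm) tgroup_scheme \<Rightarrow> 'e topology \<Rightarrow> ('g \<Rightarrow> 'e \<Rightarrow> 'e) \<Rightarrow> bool" where
  "universal_G_space G E a \<longleftrightarrow>
     gspace G E a \<and> contractible_space E \<and>
     (\<forall>e\<in>topspace E. \<exists>V \<phi>. openin E V \<and> e \<in> V \<and> g_invariant G a V \<and>
        continuous_map (subtopology E V) (gtop G) \<phi> \<and>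
        g_equivariant_on G V a (gmult G) \<phi>)"

definition orbit :: "('g, 'm) tgroup_scheme \<Rightarrow> ('g \<Rightarrow> 'x \<Rightarrow> 'x) \<Rightarrow> 'x \<Rightarrow> 'x set" where
  "orbit G a x = (\<lambda>g. a g x) ` topspace (gtop G)"

text \<open>Orbit space with the quotient topology; points are the orbits.\<close>
definition orbit_space :: "('g, 'm) tgroup_scheme \<Rightarrow> 'x topology \<Rightarrow> ('g \<Rightarrow> 'x \<Rightarrow> 'x) \<Rightarrow> 'x set topology" where
  "orbit_space G X a =
     topology_generated_by
       {U. U \<subseteq> orbit G a ` topspace X \<and> openin X (\<Union>U)}"

text \<open>Homotopy orbit space X_hG = EG \<times>_G X.\<close>
definition homotopy_orbit ::
  "('g, 'm) tgroup_scheme \<Rightarrow> 'e topology \<Rightarrow> ('g \<Rightarrow> 'e \<Rightarrow> 'e) \<Rightarrow> 'x topology \<Rightarrow> ('g \<Rightarrow> 'x \<Rightarrow> 'x)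
    \<Rightarrow> ('e \<times> 'x) set topology" where
  "homotopy_orbit G E aE X aX = orbit_space G (prod_topology E X) (prod_act aE aX)"

text \<open>The map \<triangle>_G : X_hG -> (X \<times> X)_hG induced by the diagonal.\<close>
definition diag_G :: "('e \<times> 'x) set \<Rightarrow> ('e \<times> ('x \<times> 'x)) set" where
  "diag_G C = (\<lambda>(e, x). (e, (x, x))) ` C"

type_synonym ('a, 'r) cochain = "((nat \<Rightarrow> real) \<Rightarrow> 'a) \<Rightarrow> 'r"

definition is_cocycle :: "'a topology \<Rightarrow> nat \<Rightarrow> ('a, 'r::comm_ring_1) cochain \<Rightarrow> bool" where
  "is_cocycle T n c \<longleftrightarrow>
     (\<forall>\<sigma>. singular_simplex (Suc n) T \<sigma> \<longrightarrow>
        (\<Sum>k\<le>Suc n. (-1) ^ k * c (singular_face (Suc n) k \<sigma>)) = 0)"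

definition is_coboundary :: "'a topology \<Rightarrow> nat \<Rightarrow> ('a, 'r::comm_ring_1) cochain \<Rightarrow> bool" where
  "is_coboundary T n c \<longleftrightarrow>
     (if n = 0 then (\<forall>\<sigma>. singular_simplex 0 T \<sigma> \<longrightarrow> c \<sigma> = 0)
      else (\<exists>b. \<forall>\<sigma>. singular_simplex n T \<sigma> \<longrightarrow>
               c \<sigma> = (\<Sum>k\<le>n. (-1) ^ k * b (singular_face n k \<sigma>))))"

definition pullback :: "nat \<Rightarrow> ('a \<Rightarrow> 'b) \<Rightarrow> ('b, 'r) cochain \<Rightarrow> ('a, 'r) cochain" where
  "pullback n f c \<sigma> = c (simplex_map n f \<sigma>)"

definition front_face :: "nat \<Rightarrow> ((nat \<Rightarrow> real) \<Rightarrow> 'a) \<Rightarrow> (nat \<Rightarrow> real) \<Rightarrow> 'a" where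
  "front_face p \<sigma> = restrict \<sigma> (standard_simplex p)"

definition back_face :: "nat \<Rightarrow> nat \<Rightarrow> ((nat \<Rightarrow> real) \<Rightarrow> 'a) \<Rightarrow> (nat \<Rightarrow> real) \<Rightarrow> 'a" where
  "back_face p q \<sigma> = restrict (\<sigma> \<circ> (\<lambda>x i. if i < p then 0 else x (i - p))) (standard_simplex q)"

definition cup :: "nat \<Rightarrow> nat \<Rightarrow> ('a, 'r::comm_ring_1) cochain \<Rightarrow> ('a, 'r) cochain \<Rightarrow> ('a, 'r) cochain" where
  "cup p q a b \<sigma> = a (front_face p \<sigma>) * b (back_face p q \<sigma>)"

text \<open>Elements of the total cohomology H^* = \<Oplus>_n H^n are represented by families of
  cocycles z n (one per degree), with only finitely many classes nonzero.\<close>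
type_synonym ('a, 'r) total_cochain = "nat \<Rightarrow> ('a, 'r) cochain"

definition total_cup :: "('a, 'r::comm_ring_1) total_cochain \<Rightarrow> ('a, 'r) total_cochain \<Rightarrow> ('a, 'r) total_cochain" where
  "total_cup a b n = (\<lambda>\<sigma>. \<Sum>p\<le>n. cup p (n - p) (a p) (b (n - p)) \<sigma>)"

definition total_one :: "('a, 'r::comm_ring_1) total_cochain" where
  "total_one n = (\<lambda>\<sigma>. if n = 0 then 1 else 0)"

definition total_prod :: "('a, 'r::comm_ring_1) total_cochain list \<Rightarrow> ('a, 'r) total_cochain" where
  "total_prod zs = foldr total_cup zs total_one"

definition total_cocycle :: "'a topology \<Rightarrow> ('a, 'r::comm_ring_1) total_cochain \<Rightarrow> bool" where
  "total_cocycle T z \<longleftrightarrow> (\<forall>n. is_cocycle T n (z n)) \<and> finite {n. \<not> is_coboundary T n (z n)}"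

definition class_zero :: "'a topology \<Rightarrow> ('a, 'r::comm_ring_1) total_cochain \<Rightarrow> bool" where
  "class_zero T z \<longleftrightarrow> (\<forall>n. is_coboundary T n (z n))"

definition total_pullback :: "('a \<Rightarrow> 'b) \<Rightarrow> ('b, 'r) total_cochain \<Rightarrow> ('a, 'r) total_cochain" where
  "total_pullback f z n = pullback n f (z n)"

definition paths :: "'x topology \<Rightarrow> (real \<Rightarrow> 'x) set" where
  "paths X = {\<gamma>. continuous_map (top_of_set {0..1}) X \<gamma> \<and> \<gamma> \<in> extensional {0..1}}"

definition path_space :: "'x topology \<Rightarrow> (real \<Rightarrow> 'x) topology" where
  "path_space X = topology_generated_by
     {{\<gamma> \<in> paths X. \<gamma> ` K \<subseteq> V} | K V. compactin (top_of_set {0..1}) K \<and> openin X V}"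

definition path_act :: "('g \<Rightarrow> 'x \<Rightarrow> 'x) \<Rightarrow> 'g \<Rightarrow> (real \<Rightarrow> 'x) \<Rightarrow> real \<Rightarrow> 'x" where
  "path_act a g \<gamma> = restrict (\<lambda>t. a g (\<gamma> t)) {0..1}"

definition path_ends :: "(real \<Rightarrow> 'x) \<Rightarrow> 'x \<times> 'x" where
  "path_ends \<gamma> = (\<gamma> 0, \<gamma> 1)"

text \<open>U \<subseteq> X \<times> X admits a G-equivariant motion planner: a G-map s : U -> X^I with
  \<pi> \<circ> s G-homotopic to the inclusion U -> X \<times> X.\<close>
definition G_motion_planner_on ::
  "('g, 'm) tgroup_scheme \<Rightarrow> 'x topology \<Rightarrow> ('g \<Rightarrow> 'x \<Rightarrow> 'x) \<Rightarrow> ('x \<times> 'x) set \<Rightarrow> bool" where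
  "G_motion_planner_on G X a U \<longleftrightarrow>
     (\<exists>s. continuous_map (subtopology (prod_topology X X) U) (path_space X) s \<and>
          g_equivariant_on G U (prod_act a a) (path_act a) s \<and>
          homotopic_with (\<lambda>h. g_equivariant_on G U (prod_act a a) (prod_act a a) h)
            (subtopology (prod_topology X X) U) (prod_topology X X) (path_ends \<circ> s) id)"

definition equivariant_TC :: "('g, 'm) tgroup_scheme \<Rightarrow> 'x topology \<Rightarrow> ('g \<Rightarrow> 'x \<Rightarrow> 'x) \<Rightarrow> enat" where
  "equivariant_TC G X a =
     Inf (enat ` {k. \<exists>U :: nat \<Rightarrow> ('x \<times> 'x) set.
        (\<forall>i<k. openin (prod_topology X X) (U i) \<and> g_invariant G (prod_act a a) (U i) \<and>
               G_motion_planner_on G X a (U i)) \<and>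
        (\<Union>i<k. U i) = topspace (prod_topology X X)})"

end

theory Submission
  imports Defs "HOL-Library.Function_Algebras"
begin

text \<open>Suppose X \<times> X is covered by m \<le> k invariant open sets U_j admitting equivariant motion
  planners. On the image V_j of EG \<times> U_j in (X \<times> X)_hG, the inclusion is homotopic to \<triangle>_G \<circ> F for
  some F (move along the planned paths, then shrink them to their starting points), so z_j restricts
  to zero on V_j. Hence z_j is cohomologous to a cocycle vanishing on all simplices inside V_j, and
  the product of these representatives vanishes on every simplex lying in some V_j. Since the V_j
  cover (X \<times> X)_hG, barycentric subdivision shows that this product is a coboundary, so
  z_1 \<cdots> z_k = 0.\<close>

section \<open>Cochains\<close>

abbreviation simplex_top :: "nat \<Rightarrow> (nat \<Rightarrow> real) topology" where
  "simplex_top n \<equiv> subtopology (powertop_real UNIV) (standard_simplex n)"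

definition cochain_eval :: "('a, 'r::comm_ring_1) cochain \<Rightarrow> 'a chain \<Rightarrow> 'r" where
  "cochain_eval c x = (\<Sum>\<sigma>\<in>Poly_Mapping.keys x. of_int (poly_mapping.lookup x \<sigma>) * c \<sigma>)"

definition coboundary :: "nat \<Rightarrow> ('a, 'r::comm_ring_1) cochain \<Rightarrow> ('a, 'r) cochain" where
  "coboundary n b \<sigma> = (\<Sum>k\<le>n. (-1) ^ k * b (singular_face n k \<sigma>))"

lemma cochain_eval_superset:
  assumes "finite S" "Poly_Mapping.keys x \<subseteq> S"
  shows "cochain_eval c x = (\<Sum>\<sigma>\<in>S. of_int (poly_mapping.lookup x \<sigma>) * c \<sigma>)"
  unfolding cochain_eval_def
  by (rule sum.mono_neutral_left) (use assms in \<open>auto simp: in_keys_iff\<close>)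

lemma cochain_eval_0 [simp]: "cochain_eval c 0 = 0"
  by (simp add: cochain_eval_def)

lemma cochain_eval_of [simp]: "cochain_eval c (frag_of \<sigma>) = c \<sigma>"
  by (simp add: cochain_eval_def)

lemma cochain_eval_diff: "cochain_eval c (a - b) = cochain_eval c a - cochain_eval c b"
proof -
  let ?S = "Poly_Mapping.keys a \<union> Poly_Mapping.keys b"
  show ?thesis
    by (simp add: cochain_eval_superset[OF _ keys_diff] cochain_eval_superset[of ?S a]
        cochain_eval_superset[of ?S b] lookup_minus left_diff_distrib sum_subtractf)
qed

lemma cochain_eval_cmul: "cochain_eval c (frag_cmul k a) = of_int k * cochain_eval c a"
proof -
  have keys: "Poly_Mapping.keys (frag_cmul k a) \<subseteq> Poly_Mapping.keys a"
    by (auto simp: in_keys_iff)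
  show ?thesis
    by (simp add: cochain_eval_superset[OF _ keys] cochain_eval_superset[of "Poly_Mapping.keys a" a]
        sum_distrib_left mult.assoc)
qed

lemma cochain_eval_add: "cochain_eval c (a + b) = cochain_eval c a + cochain_eval c b"
  using cochain_eval_diff[of c a "- b"] cochain_eval_diff[of c 0 b] by simp

lemma cochain_eval_sum: "cochain_eval c (sum f I) = (\<Sum>i\<in>I. cochain_eval c (f i))"
  by (induction I rule: infinite_finite_induct) (simp_all add: cochain_eval_add)

lemma cochain_eval_eq_0:
  "(\<And>\<sigma>. \<sigma> \<in> Poly_Mapping.keys x \<Longrightarrow> c \<sigma> = 0) \<Longrightarrow> cochain_eval c x = 0"
  by (simp add: cochain_eval_def)

lemma additive_eq_cochain_eval:
  assumes "\<And>a b. G (a - b) = G a - G b"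
  shows "G x = cochain_eval (\<lambda>\<sigma>. G (frag_of \<sigma>)) x"
  using subset_UNIV
proof (induction x rule: frag_induction)
  case zero
  then show ?case using assms[of 0 0] by simp
qed (simp_all add: assms cochain_eval_diff)

lemma cochain_eval_chain_boundary_of:
  "0 < n \<Longrightarrow> cochain_eval c (chain_boundary n (frag_of \<sigma>)) = coboundary n c \<sigma>"
  by (simp add: chain_boundary_of cochain_eval_sum cochain_eval_cmul coboundary_def)

lemma cochain_eval_coboundary:
  "0 < n \<Longrightarrow> cochain_eval (coboundary n b) x = cochain_eval b (chain_boundary n x)"
  using subset_UNIV
proof (induction x rule: frag_induction)
  case (one \<sigma>)
  then show ?case by (simp add: cochain_eval_chain_boundary_of)
qed (auto simp: chain_boundary_diff cochain_eval_diff)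

lemma is_cocycle_iff_coboundary:
  "is_cocycle T n c \<longleftrightarrow> (\<forall>\<sigma>. singular_simplex (Suc n) T \<sigma> \<longrightarrow> coboundary (Suc n) c \<sigma> = 0)"
  by (simp add: is_cocycle_def coboundary_def)

lemma is_coboundary_iff:
  "is_coboundary T n c \<longleftrightarrow>
     (if n = 0 then \<forall>\<sigma>. singular_simplex 0 T \<sigma> \<longrightarrow> c \<sigma> = 0
      else \<exists>b. \<forall>\<sigma>. singular_simplex n T \<sigma> \<longrightarrow> c \<sigma> = coboundary n b \<sigma>)"
  by (simp add: is_coboundary_def coboundary_def)

lemma is_coboundaryI:
  "0 < n \<Longrightarrow> (\<And>\<sigma>. singular_simplex n T \<sigma> \<Longrightarrow> c \<sigma> = coboundary n b \<sigma>) \<Longrightarrow> is_coboundary T n c"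
  by (auto simp: is_coboundary_iff)

lemma cochain_eval_cocycle_boundary:
  assumes "is_cocycle T n c" "singular_chain (Suc n) T x"
  shows "cochain_eval c (chain_boundary (Suc n) x) = 0"
  using assms(2) unfolding singular_chain_def
proof (induction rule: frag_induction)
  case (one \<sigma>)
  then show ?case
    using assms(1) by (simp add: cochain_eval_chain_boundary_of is_cocycle_iff_coboundary)
qed (auto simp: chain_boundary_diff cochain_eval_diff)

lemma is_cocycle_coboundary: "0 < n \<Longrightarrow> is_cocycle T n (coboundary n b)"
  unfolding is_cocycle_iff_coboundary
proof clarify
  fix \<sigma> assume "0 < n" and \<sigma>: "singular_simplex (Suc n) T \<sigma>"
  then have "coboundary (Suc n) (coboundary n b) \<sigma>
               = cochain_eval b (chain_boundary n (chain_boundary (Suc n) (frag_of \<sigma>)))"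
    by (simp flip: cochain_eval_chain_boundary_of add: cochain_eval_coboundary)
  also have "\<dots> = 0"
    using chain_boundary_boundary_alt[of n T "frag_of \<sigma>"] \<sigma> by (simp add: singular_chain_of)
  finally show "coboundary (Suc n) (coboundary n b) \<sigma> = 0" .
qed

lemma coboundary_diff: "coboundary n (\<lambda>\<sigma>. a \<sigma> - b \<sigma>) \<sigma> = coboundary n a \<sigma> - coboundary n b \<sigma>"
  by (simp add: coboundary_def right_diff_distrib sum_subtractf)

lemma coboundary_add: "coboundary n (\<lambda>\<sigma>. a \<sigma> + b \<sigma>) \<sigma> = coboundary n a \<sigma> + coboundary n b \<sigma>"
  by (simp add: coboundary_def distrib_left sum.distrib)

lemma coboundary_sum: "coboundary n (\<lambda>\<sigma>. \<Sum>i\<in>I. a i \<sigma>) \<sigma> = (\<Sum>i\<in>I. coboundary n (a i) \<sigma>)"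
  by (simp add: coboundary_def sum_distrib_left sum.swap[of _ I])

lemma coboundary_cmul: "coboundary n (\<lambda>\<sigma>. r * a \<sigma>) \<sigma> = r * coboundary n a \<sigma>"
  by (simp add: coboundary_def sum_distrib_left mult.left_commute)

lemma is_coboundary_add:
  "is_coboundary T n a \<Longrightarrow> is_coboundary T n b \<Longrightarrow> is_coboundary T n (\<lambda>\<sigma>. a \<sigma> + b \<sigma>)"
  by (auto simp: is_coboundary_iff coboundary_add[symmetric] split: if_splits)

lemma is_coboundary_diff:
  "is_coboundary T n a \<Longrightarrow> is_coboundary T n b \<Longrightarrow> is_coboundary T n (\<lambda>\<sigma>. a \<sigma> - b \<sigma>)"
  by (auto simp: is_coboundary_iff coboundary_diff[symmetric] split: if_splits)

lemma is_coboundary_cong: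
  "is_coboundary T n a \<Longrightarrow> (\<And>\<sigma>. singular_simplex n T \<sigma> \<Longrightarrow> a \<sigma> = b \<sigma>) \<Longrightarrow> is_coboundary T n b"
  by (auto simp: is_coboundary_iff split: if_splits)

lemma is_cocycle_diff:
  "is_cocycle T n a \<Longrightarrow> is_cocycle T n b \<Longrightarrow> is_cocycle T n (\<lambda>\<sigma>. a \<sigma> - b \<sigma>)"
  by (simp add: is_cocycle_iff_coboundary coboundary_diff)

lemma is_cocycle_sum:
  "(\<And>i. i \<in> I \<Longrightarrow> is_cocycle T n (a i)) \<Longrightarrow> is_cocycle T n (\<lambda>\<sigma>. \<Sum>i\<in>I. a i \<sigma>)"
  by (simp add: is_cocycle_iff_coboundary coboundary_sum)

section \<open>The cup product\<close>

definition shift_coords :: "nat \<Rightarrow> (nat \<Rightarrow> real) \<Rightarrow> nat \<Rightarrow> real" where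
  "shift_coords p x i = (if i < p then 0 else x (i - p))"

lemma back_face_eq: "back_face p q \<sigma> = restrict (\<sigma> \<circ> shift_coords p) (standard_simplex q)"
  by (simp add: back_face_def shift_coords_def[abs_def])

lemma sum_shift_coords: "(\<Sum>i\<le>p+q. shift_coords p x i) = (\<Sum>j\<le>q. x j)"
proof -
  have "(\<Sum>i\<le>p+q. shift_coords p x i) = (\<Sum>i\<in>{0+p..q+p}. shift_coords p x i)"
    by (rule sum.mono_neutral_right) (auto simp: shift_coords_def)
  also have "\<dots> = (\<Sum>j\<le>q. x j)"
    by (simp only: sum.shift_bounds_cl_nat_ivl) (simp add: shift_coords_def atLeast0AtMost)
  finally show ?thesis .
qed

lemma shift_coords_in_standard_simplex:
  "x \<in> standard_simplex q \<Longrightarrow> shift_coords p x \<in> standard_simplex (p+q)"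
  unfolding standard_simplex_def using sum_shift_coords[where p=p and q=q and x=x]
  by (auto simp: shift_coords_def)

lemma simplical_face_beyond:
  "x \<in> standard_simplex p \<Longrightarrow> p < k \<Longrightarrow> simplical_face k x = x"
  by (auto simp: simplical_face_def standard_simplex_def fun_eq_iff)

lemma simplical_face_shift_coords_low:
  "k \<le> p \<Longrightarrow> simplical_face k (shift_coords p x) = shift_coords (Suc p) x"
  by (auto simp: simplical_face_def shift_coords_def fun_eq_iff)

lemma simplical_face_shift_coords_high:
  "simplical_face (Suc (p + l)) (shift_coords p x) = shift_coords p (simplical_face (Suc l) x)"
  by (auto simp: simplical_face_def shift_coords_def fun_eq_iff)

lemma shift_coords_simplical_face_0:
  "shift_coords p (simplical_face 0 x) = shift_coords (Suc p) x"
  by (auto simp: simplical_face_def shift_coords_def fun_eq_iff)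

lemma simplical_face_in_standard_simplex_Suc:
  "x \<in> standard_simplex p \<Longrightarrow> k \<le> Suc p \<Longrightarrow> simplical_face k x \<in> standard_simplex (Suc p)"
  using simplical_face_in_standard_simplex[of "Suc p" k x] by simp

lemma front_face_singular_face_low:
  "k \<le> p \<Longrightarrow>
     front_face p (singular_face (Suc (p+q)) k \<sigma>) = singular_face (Suc p) k (front_face (Suc p) \<sigma>)"
  unfolding front_face_def singular_face_def
  by (auto simp: fun_eq_iff simplical_face_in_standard_simplex_Suc
      dest: standard_simplex_mono[of p "p + q", THEN subsetD, rotated])

lemma back_face_singular_face_low:
  "k \<le> p \<Longrightarrow> back_face p q (singular_face (Suc (p+q)) k \<sigma>) = back_face (Suc p) q \<sigma>"
  unfolding back_face_eq singular_face_def
  by (auto simp: fun_eq_iff shift_coords_in_standard_simplex simplical_face_shift_coords_low)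

lemma front_face_singular_face_high:
  "front_face p (singular_face (Suc (p+q)) (Suc (p+l)) \<sigma>) = front_face p \<sigma>"
  unfolding front_face_def singular_face_def
  by (auto simp: fun_eq_iff simplical_face_beyond dest: standard_simplex_mono[of p "p + q", THEN subsetD, rotated])

lemma back_face_singular_face_high:
  "l \<le> q \<Longrightarrow>
     back_face p q (singular_face (Suc (p+q)) (Suc (p+l)) \<sigma>)
       = singular_face (Suc q) (Suc l) (back_face p (Suc q) \<sigma>)"
  unfolding back_face_eq singular_face_def
  by (auto simp: fun_eq_iff shift_coords_in_standard_simplex simplical_face_in_standard_simplex_Suc
      simplical_face_shift_coords_high)

lemma singular_face_front_face_last:
  "singular_face (Suc p) (Suc p) (front_face (Suc p) \<sigma>) = front_face p \<sigma>"
  unfolding front_face_def singular_face_def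
  using standard_simplex_mono[of p "Suc p"]
  by (auto simp: fun_eq_iff simplical_face_in_standard_simplex_Suc simplical_face_beyond)

lemma singular_face_back_face_first:
  "singular_face (Suc q) 0 (back_face p (Suc q) \<sigma>) = back_face (Suc p) q \<sigma>"
  unfolding back_face_eq singular_face_def
  by (auto simp: fun_eq_iff shift_coords_in_standard_simplex simplical_face_in_standard_simplex_Suc
      shift_coords_simplical_face_0)

lemma sum_atMost_Suc_add_split:
  "(\<Sum>k\<le>Suc (p+q). f k) = (\<Sum>k\<le>p. f k) + (\<Sum>l\<le>q. f (Suc (p+l)))"
  by (induction q) (auto simp: add.assoc)

lemma coboundary_cup:
  fixes a b :: "('a,'r::comm_ring_1) cochain"
  shows "coboundary (Suc (p+q)) (cup p q a b) \<sigma> =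
           cup (Suc p) q (coboundary (Suc p) a) b \<sigma> + (-1)^p * cup p (Suc q) a (coboundary (Suc q) b) \<sigma>"
proof -
  define F where "F = front_face (Suc p) \<sigma>"
  define B where "B = back_face (Suc p) q \<sigma>"
  define B' where "B' = back_face p (Suc q) \<sigma>"
  define A where "A = a (front_face p \<sigma>)"
  have "coboundary (Suc (p+q)) (cup p q a b) \<sigma> =
          (\<Sum>k\<le>p. (-1)^k * (a (singular_face (Suc p) k F) * b B))
          + (\<Sum>l\<le>q. (-1)^(Suc (p+l)) * (A * b (singular_face (Suc q) (Suc l) B')))"
    unfolding coboundary_def cup_def sum_atMost_Suc_add_split F_def B_def B'_def A_def
    by (intro arg_cong2[where f="(+)"] sum.cong refl)
      (simp_all add: front_face_singular_face_low back_face_singular_face_low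
        front_face_singular_face_high back_face_singular_face_high)
  moreover have "cup (Suc p) q (coboundary (Suc p) a) b \<sigma> =
          (\<Sum>k\<le>p. (-1)^k * (a (singular_face (Suc p) k F) * b B)) + (-1)^(Suc p) * (A * b B)"
    by (simp add: cup_def coboundary_def F_def B_def A_def singular_face_front_face_last
        sum_distrib_right mult.assoc left_diff_distrib)
  moreover have "cup p (Suc q) a (coboundary (Suc q) b) \<sigma> =
          A * b B + (\<Sum>l\<le>q. (-1)^(Suc l) * (A * b (singular_face (Suc q) (Suc l) B')))"
  proof -
    have "(\<Sum>l\<le>Suc q. (-1)^l * b (singular_face (Suc q) l B'))
          = b B + (\<Sum>l\<le>q. (-1)^(Suc l) * b (singular_face (Suc q) (Suc l) B'))"
      by (subst sum.atMost_Suc_shift) (simp add: singular_face_back_face_first B'_def B_def)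
    then show ?thesis
      by (simp add: cup_def coboundary_def A_def distrib_left sum_distrib_left mult.left_commute B'_def)
  qed
  ultimately show ?thesis
    by (simp add: distrib_left sum_distrib_left mult.assoc power_add)
qed

lemma singular_simplex_front_face:
  assumes "singular_simplex (p+q) T \<sigma>"
  shows "singular_simplex p T (front_face p \<sigma>)"
proof -
  have "continuous_map (simplex_top p) T \<sigma>"
    using assms continuous_map_from_subtopology_mono standard_simplex_mono[of p "p+q"]
    by (auto simp: singular_simplex_def)
  then show ?thesis
    unfolding singular_simplex_def front_face_def by (auto intro: continuous_map_eq)
qed

lemma continuous_map_shift_coords:
  "continuous_map (simplex_top q) (simplex_top (p+q)) (shift_coords p)"
proof -
  have "continuous_map (powertop_real UNIV) euclideanreal (\<lambda>x. shift_coords p x k)" for k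
    by (auto simp: shift_coords_def intro: continuous_map_product_projection)
  then show ?thesis
    by (auto simp: continuous_map_in_subtopology continuous_map_componentwise_UNIV
        shift_coords_in_standard_simplex intro: continuous_map_from_subtopology)
qed

lemma singular_simplex_back_face:
  assumes "singular_simplex (p+q) T \<sigma>"
  shows "singular_simplex q T (back_face p q \<sigma>)"
proof -
  have "continuous_map (simplex_top q) T (\<sigma> \<circ> shift_coords p)"
    using assms continuous_map_compose[OF continuous_map_shift_coords] by (auto simp: singular_simplex_def)
  then show ?thesis
    unfolding singular_simplex_def back_face_eq by (auto intro: continuous_map_eq)
qed

lemma is_cocycle_cup:
  assumes "is_cocycle T p a" "is_cocycle T q b"
  shows "is_cocycle T (p+q) (cup p q a b)"
  unfolding is_cocycle_iff_coboundary
proof clarify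
  fix \<sigma> assume \<sigma>: "singular_simplex (Suc (p+q)) T \<sigma>"
  have "coboundary (Suc p) a (front_face (Suc p) \<sigma>) = 0"
    using assms(1) singular_simplex_front_face[of "Suc p" q T \<sigma>] \<sigma> by (simp add: is_cocycle_iff_coboundary)
  moreover have "coboundary (Suc q) b (back_face p (Suc q) \<sigma>) = 0"
    using assms(2) singular_simplex_back_face[of p "Suc q" T \<sigma>] \<sigma> by (simp add: is_cocycle_iff_coboundary)
  ultimately show "coboundary (Suc (p+q)) (cup p q a b) \<sigma> = 0"
    by (simp add: coboundary_cup cup_def)
qed

lemma cup_coboundary_right:
  assumes "is_cocycle T p a"
    and "\<And>\<tau>. singular_simplex (Suc q) T \<tau> \<Longrightarrow> b \<tau> = coboundary (Suc q) \<beta> \<tau>"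
    and \<sigma>: "singular_simplex (Suc (p+q)) T \<sigma>"
  shows "cup p (Suc q) a b \<sigma> = (-1)^p * coboundary (Suc (p+q)) (cup p q a \<beta>) \<sigma>"
proof -
  have "coboundary (Suc p) a (front_face (Suc p) \<sigma>) = 0"
    using assms(1) singular_simplex_front_face[of "Suc p" q T \<sigma>] \<sigma> by (simp add: is_cocycle_iff_coboundary)
  moreover have "b (back_face p (Suc q) \<sigma>) = coboundary (Suc q) \<beta> (back_face p (Suc q) \<sigma>)"
    using assms(2) singular_simplex_back_face[of p "Suc q" T \<sigma>] \<sigma> by simp
  ultimately show ?thesis
    by (simp add: coboundary_cup cup_def)
qed

lemma cup_coboundary_left:
  assumes "is_cocycle T q b"
    and "\<And>\<tau>. singular_simplex (Suc p) T \<tau> \<Longrightarrow> a \<tau> = coboundary (Suc p) \<alpha> \<tau>"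
    and \<sigma>: "singular_simplex (Suc (p+q)) T \<sigma>"
  shows "cup (Suc p) q a b \<sigma> = coboundary (Suc (p+q)) (cup p q \<alpha> b) \<sigma>"
proof -
  have "coboundary (Suc q) b (back_face p (Suc q) \<sigma>) = 0"
    using assms(1) singular_simplex_back_face[of p "Suc q" T \<sigma>] \<sigma> by (simp add: is_cocycle_iff_coboundary)
  moreover have "a (front_face (Suc p) \<sigma>) = coboundary (Suc p) \<alpha> (front_face (Suc p) \<sigma>)"
    using assms(2) singular_simplex_front_face[of "Suc p" q T \<sigma>] \<sigma> by simp
  ultimately show ?thesis
    by (simp add: coboundary_cup cup_def)
qed

section \<open>Total cochains and their products\<close>

definition degreewise_cocycle :: "'a topology \<Rightarrow> ('a, 'r::comm_ring_1) total_cochain \<Rightarrow> bool" where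
  "degreewise_cocycle T z \<longleftrightarrow> (\<forall>n. is_cocycle T n (z n))"

lemma class_zeroE:
  assumes "class_zero T b"
  obtains \<beta> where "\<And>d \<tau>. singular_simplex (Suc d) T \<tau> \<Longrightarrow> b (Suc d) \<tau> = coboundary (Suc d) (\<beta> d) \<tau>"
    and "\<And>\<tau>. singular_simplex 0 T \<tau> \<Longrightarrow> b 0 \<tau> = 0"
proof -
  have "\<forall>d. \<exists>\<beta>. \<forall>\<tau>. singular_simplex (Suc d) T \<tau> \<longrightarrow> b (Suc d) \<tau> = coboundary (Suc d) \<beta> \<tau>"
    using assms by (simp add: class_zero_def is_coboundary_iff)
  moreover have "\<forall>\<tau>. singular_simplex 0 T \<tau> \<longrightarrow> b 0 \<tau> = 0"
    using assms by (auto simp: class_zero_def is_coboundary_iff dest: spec[of _ 0])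
  ultimately show thesis
    using that by metis
qed

lemma degreewise_cocycle_total_cup:
  assumes "degreewise_cocycle T a" "degreewise_cocycle T b"
  shows "degreewise_cocycle T (total_cup a b)"
  unfolding degreewise_cocycle_def total_cup_def
proof
  fix n
  show "is_cocycle T n (\<lambda>\<sigma>. \<Sum>p\<le>n. cup p (n - p) (a p) (b (n - p)) \<sigma>)"
  proof (rule is_cocycle_sum)
    fix p assume "p \<in> {..n}"
    then show "is_cocycle T n (cup p (n - p) (a p) (b (n - p)))"
      using is_cocycle_cup[of T p "a p" "n-p" "b (n-p)"] assms by (simp add: degreewise_cocycle_def)
  qed
qed

lemma class_zero_total_cup_right:
  assumes a: "degreewise_cocycle T a" and b: "class_zero T b"
  shows "class_zero T (total_cup a b)"
  unfolding class_zero_def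
proof
  fix n
  obtain \<beta> where \<beta>: "\<And>d \<tau>. singular_simplex (Suc d) T \<tau> \<Longrightarrow> b (Suc d) \<tau> = coboundary (Suc d) (\<beta> d) \<tau>"
    and b0: "\<And>\<tau>. singular_simplex 0 T \<tau> \<Longrightarrow> b 0 \<tau> = 0"
    using class_zeroE[OF b] by blast
  have last: "cup p 0 (a p) (b 0) \<sigma> = 0" if "singular_simplex p T \<sigma>" for p \<sigma>
    using b0 singular_simplex_back_face[of p 0 T \<sigma>] that by (simp add: cup_def)
  show "is_coboundary T n (total_cup a b n)"
  proof (cases n)
    case 0
    then show ?thesis
      by (simp add: is_coboundary_iff total_cup_def last)
  next
    case (Suc m)
    have "total_cup a b (Suc m) \<sigma>
            = coboundary (Suc m) (\<lambda>\<tau>. \<Sum>p\<le>m. (-1)^p * cup p (m-p) (a p) (\<beta> (m-p)) \<tau>) \<sigma>"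
      if \<sigma>: "singular_simplex (Suc m) T \<sigma>" for \<sigma>
    proof -
      have "cup p (Suc m - p) (a p) (b (Suc m - p)) \<sigma>
              = (-1)^p * coboundary (Suc m) (cup p (m-p) (a p) (\<beta> (m-p))) \<sigma>" if "p \<le> m" for p
        using cup_coboundary_right[of T p "a p" "m-p" "b (Suc (m-p))" "\<beta> (m-p)" \<sigma>] a \<sigma> \<beta> that
        by (simp add: degreewise_cocycle_def Suc_diff_le)
      then show ?thesis
        using last[OF \<sigma>] by (simp add: total_cup_def coboundary_sum coboundary_cmul)
    qed
    then show ?thesis
      using Suc by (auto simp: is_coboundary_iff)
  qed
qed

lemma class_zero_total_cup_left:
  assumes a: "class_zero T a" and b: "degreewise_cocycle T b"
  shows "class_zero T (total_cup a b)"
  unfolding class_zero_def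
proof
  fix n
  obtain \<alpha> where \<alpha>: "\<And>d \<tau>. singular_simplex (Suc d) T \<tau> \<Longrightarrow> a (Suc d) \<tau> = coboundary (Suc d) (\<alpha> d) \<tau>"
    and a0: "\<And>\<tau>. singular_simplex 0 T \<tau> \<Longrightarrow> a 0 \<tau> = 0"
    using class_zeroE[OF a] by blast
  have first: "cup 0 q (a 0) (b q) \<sigma> = 0" if "singular_simplex q T \<sigma>" for q \<sigma>
    using a0 singular_simplex_front_face[of 0 q T \<sigma>] that by (simp add: cup_def)
  show "is_coboundary T n (total_cup a b n)"
  proof (cases n)
    case 0
    then show ?thesis
      by (simp add: is_coboundary_iff total_cup_def first)
  next
    case (Suc m)
    have "total_cup a b (Suc m) \<sigma>
            = coboundary (Suc m) (\<lambda>\<tau>. \<Sum>p\<le>m. cup p (m-p) (\<alpha> p) (b (m-p)) \<tau>) \<sigma>"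
      if \<sigma>: "singular_simplex (Suc m) T \<sigma>" for \<sigma>
    proof -
      have "cup (Suc p) (Suc m - Suc p) (a (Suc p)) (b (Suc m - Suc p)) \<sigma>
              = coboundary (Suc m) (cup p (m-p) (\<alpha> p) (b (m-p))) \<sigma>" if "p \<le> m" for p
        using cup_coboundary_left[of T "m-p" "b (m-p)" p "a (Suc p)" "\<alpha> p" \<sigma>] b \<sigma> \<alpha> that
        by (simp add: degreewise_cocycle_def)
      then show ?thesis
        using first[OF \<sigma>]
        by (simp add: total_cup_def coboundary_sum sum.atMost_Suc_shift del: sum.atMost_Suc)
    qed
    then show ?thesis
      using Suc by (auto simp: is_coboundary_iff)
  qed
qed

lemma total_cup_diff_left: "total_cup (a - a') b = total_cup a b - total_cup a' b"
  by (simp add: total_cup_def cup_def fun_eq_iff left_diff_distrib sum_subtractf)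

lemma total_cup_diff_right: "total_cup a (b - b') = total_cup a b - total_cup a b'"
  by (simp add: total_cup_def cup_def fun_eq_iff right_diff_distrib sum_subtractf)

lemma class_zero_add: "class_zero T a \<Longrightarrow> class_zero T b \<Longrightarrow> class_zero T (a + b)"
  using is_coboundary_add[of T _ "a _" "b _"] by (simp add: class_zero_def plus_fun_def)

lemma degreewise_cocycle_diff:
  "degreewise_cocycle T a \<Longrightarrow> degreewise_cocycle T b \<Longrightarrow> degreewise_cocycle T (a - b)"
  using is_cocycle_diff[of T _ "a _" "b _"] by (simp add: degreewise_cocycle_def fun_diff_def)

lemma total_prod_Cons: "total_prod (z # zs) = total_cup z (total_prod zs)"
  by (simp add: total_prod_def)

lemma degreewise_cocycle_total_prod:
  "(\<And>z. z \<in> set zs \<Longrightarrow> degreewise_cocycle T z) \<Longrightarrow> degreewise_cocycle T (total_prod zs)"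
proof (induction zs)
  case Nil
  then show ?case
    by (auto simp: total_prod_def degreewise_cocycle_def is_cocycle_iff_coboundary coboundary_def total_one_def)
qed (simp add: total_prod_Cons degreewise_cocycle_total_cup)

lemma class_zero_total_prod_diff:
  assumes "list_all2 (\<lambda>z z'. degreewise_cocycle T z \<and> degreewise_cocycle T z' \<and> class_zero T (z - z')) zs zs'"
  shows "class_zero T (total_prod zs - total_prod zs')"
  using assms
proof (induction zs arbitrary: zs')
  case Nil
  then show ?case
    by (auto simp: class_zero_def is_coboundary_iff coboundary_def intro!: exI[of _ "\<lambda>_. 0"])
next
  case (Cons z zs)
  then obtain z' zs'' where zs': "zs' = z' # zs''"
    and z: "degreewise_cocycle T z" "degreewise_cocycle T z'" "class_zero T (z - z')"
    and rest: "list_all2 (\<lambda>z z'. degreewise_cocycle T z \<and> degreewise_cocycle T z' \<and> class_zero T (z - z')) zs zs''"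
    unfolding list_all2_Cons1 by blast
  have "degreewise_cocycle T (total_prod zs)"
    using rest by (intro degreewise_cocycle_total_prod) (auto simp: list_all2_conv_all_nth in_set_conv_nth)
  then have "class_zero T (total_cup (z - z') (total_prod zs) + total_cup z' (total_prod zs - total_prod zs''))"
    using Cons.IH[OF rest] z by (intro class_zero_add class_zero_total_cup_left class_zero_total_cup_right)
  moreover have "total_cup z (total_prod zs) - total_cup z' (total_prod zs'')
     = total_cup (z - z') (total_prod zs) + total_cup z' (total_prod zs - total_prod zs'')"
    by (simp add: total_cup_diff_left total_cup_diff_right)
  ultimately show ?case
    by (simp only: zs' total_prod_Cons)
qed

lemma total_prod_vanishes:
  assumes "w \<in> set ws" "\<And>d \<tau>. singular_simplex d T \<tau> \<Longrightarrow> w d \<tau> = 0" "singular_simplex n T \<sigma>"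
  shows "total_prod ws n \<sigma> = 0"
  using assms
proof (induction ws arbitrary: n \<sigma>)
  case (Cons y ws)
  have "cup p (n-p) (y p) (total_prod ws (n-p)) \<sigma> = 0" if "p \<le> n" for p
  proof (cases "y = w")
    case True
    then show ?thesis
      using Cons.prems(2,3) singular_simplex_front_face[of p "n-p" T \<sigma>] that by (simp add: cup_def)
  next
    case False
    then show ?thesis
      using Cons singular_simplex_back_face[of p "n-p" T \<sigma>] that by (simp add: cup_def)
  qed
  then show ?case
    by (simp add: total_prod_Cons total_cup_def)
qed simp

section \<open>Homotopy invariance via acyclic models\<close>

abbreviation simplex_id :: "nat \<Rightarrow> (nat \<Rightarrow> real) chain" where
  "simplex_id n \<equiv> frag_of (restrict id (standard_simplex n))"

lemma contractible_space_standard_simplex: "contractible_space (simplex_top p)"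
proof -
  define v :: "nat \<Rightarrow> real" where "v = (\<lambda>j. if j = 0 then 1 else 0)"
  let ?S = "simplex_top p"
  let ?T = "prod_topology (top_of_set {0..1::real}) ?S"
  let ?h = "\<lambda>(t, x) i. (1 - t) * x i + t * v i"
  have x: "continuous_map ?T euclideanreal (\<lambda>(t, x). x i)" for i
    using continuous_map_compose[OF continuous_map_snd
        continuous_map_from_subtopology[OF continuous_map_product_projection[of i UNIV "\<lambda>_. euclideanreal"]]]
    by (simp add: o_def case_prod_unfold)
  have t: "continuous_map ?T euclideanreal (\<lambda>(t, x). t)"
    using continuous_map_compose[OF continuous_map_fst continuous_map_from_subtopology[OF continuous_map_id]]
    by (simp add: o_def case_prod_unfold)
  have "continuous_map ?T (powertop_real UNIV) ?h"
    using x t by (auto simp: continuous_map_componentwise_UNIV case_prod_unfold intro!: continuous_intros)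
  moreover have "?h \<in> topspace ?T \<rightarrow> standard_simplex p"
    using convex_standard_simplex[of _ p v] by (force simp: v_def)
  ultimately have "continuous_map ?T ?S ?h"
    by (simp add: continuous_map_in_subtopology)
  then show ?thesis
    unfolding contractible_space_def homotopic_with_def by (intro exI[of _ v] exI[of _ ?h]) auto
qed

lemma contractible_cycle_is_boundary:
  assumes X: "contractible_space X" and "p \<noteq> 0"
    and c: "singular_chain p X c" "chain_boundary p c = 0"
  obtains d where "singular_chain (Suc p) X d" "chain_boundary (Suc p) d = c"
proof -
  have "trivial_group (homology_group (int p) X)"
    using trivial_reduced_homology_group_contractible_space[OF X, of "int p"] \<open>p \<noteq> 0\<close>
    by (simp add: un_reduced_homology_group)
  moreover have "homologous_rel_set p X {} c \<in> carrier (homology_group (int p) X)"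
    using c by (auto simp: carrier_relative_homology_group singular_cycle)
  ultimately have "singular_relboundary p X {} c"
    by (simp add: trivial_group_def homologous_rel_set_eq_relboundary)
  then show ?thesis
    using that by (auto simp: singular_boundary)
qed

definition cylinder_map :: "('a \<Rightarrow> 'b) \<Rightarrow> real \<times> 'a \<Rightarrow> real \<times> 'b" where
  "cylinder_map f = (\<lambda>(t, x). (t, f x))"

definition prism_space :: "nat \<Rightarrow> (real \<times> (nat \<Rightarrow> real)) topology" where
  "prism_space n = prod_topology (top_of_set {0..1}) (simplex_top n)"

text \<open>Acyclic models: prism_model n is a chain on I \<times> \<Delta>^n whose boundary is top - bottom - (prism
  over the boundary of \<Delta>^n). By the construction in lower degrees the right-hand side is a cycle, so
  such a chain exists because I \<times> \<Delta>^n is contractible. Pushing it forward along id \<times> \<sigma> gives a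
  prism operator that is natural in \<sigma>.\<close>
primrec prism_model :: "nat \<Rightarrow> (real \<times> (nat \<Rightarrow> real)) chain" where
  "prism_model 0 =
     (SOME d. singular_chain 1 (prism_space 0) d \<and>
        chain_boundary 1 d = chain_map 0 (Pair 1) (simplex_id 0) - chain_map 0 (Pair 0) (simplex_id 0))"
| "prism_model (Suc n) =
     (SOME d. singular_chain (Suc (Suc n)) (prism_space (Suc n)) d \<and>
        chain_boundary (Suc (Suc n)) d =
          chain_map (Suc n) (Pair 1) (simplex_id (Suc n)) - chain_map (Suc n) (Pair 0) (simplex_id (Suc n))
          - frag_extend (\<lambda>\<sigma>. chain_map (Suc n) (cylinder_map \<sigma>) (prism_model n))
              (chain_boundary (Suc n) (simplex_id (Suc n))))"

definition prism :: "nat \<Rightarrow> 'a chain \<Rightarrow> (real \<times> 'a) chain" where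
  "prism n = frag_extend (\<lambda>\<sigma>. chain_map (Suc n) (cylinder_map \<sigma>) (prism_model n))"

text \<open>For n = 0 the last term is prism 0 0 = 0, since chain_boundary 0 is zero.\<close>
definition prism_model_spec :: "nat \<Rightarrow> bool" where
  "prism_model_spec n \<longleftrightarrow> singular_chain (Suc n) (prism_space n) (prism_model n) \<and>
     chain_boundary (Suc n) (prism_model n) =
       chain_map n (Pair 1) (simplex_id n) - chain_map n (Pair 0) (simplex_id n)
       - prism (n - 1) (chain_boundary n (simplex_id n))"

lemma prism_model_eq:
  "prism_model n = (SOME d. singular_chain (Suc n) (prism_space n) d \<and>
     chain_boundary (Suc n) d =
       chain_map n (Pair 1) (simplex_id n) - chain_map n (Pair 0) (simplex_id n)
       - prism (n - 1) (chain_boundary n (simplex_id n)))"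
  by (cases n) (simp_all add: prism_def chain_boundary_of)

lemma prism_0 [simp]: "prism n 0 = 0"
  by (simp add: prism_def)

lemma prism_diff: "prism n (a - b) = prism n a - prism n b"
  by (simp add: prism_def frag_extend_diff)

lemma singular_simplex_simplex_id: "singular_simplex n (simplex_top n) (restrict id (standard_simplex n))"
  by (simp add: simplicial_imp_singular_simplex)

lemma continuous_map_cylinder_map:
  "continuous_map X Y f \<Longrightarrow>
     continuous_map (prod_topology T X) (prod_topology T Y) (cylinder_map f)"
  unfolding cylinder_map_def case_prod_unfold
  by (intro continuous_map_pairedI continuous_map_fst continuous_map_compose[OF continuous_map_snd, unfolded o_def])

lemma continuous_map_Pair_const:
  "t \<in> topspace T \<Longrightarrow> continuous_map X (prod_topology T X) (Pair t)"
  by (intro continuous_map_pairedI) auto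

lemma contractible_prism_space: "contractible_space (prism_space n)"
  by (simp add: prism_space_def contractible_space_prod_topology contractible_space_standard_simplex
      convex_imp_contractible is_interval_convex_1)

lemma singular_chain_prism:
  assumes M: "singular_chain (Suc n) (prism_space n) (prism_model n)" and c: "singular_chain n S c"
  shows "singular_chain (Suc n) (prod_topology (top_of_set {0..1}) S) (prism n c)"
  using c unfolding singular_chain_def[of n]
proof (induction c rule: frag_induction)
  case (one \<sigma>)
  then have "continuous_map (prism_space n) (prod_topology (top_of_set {0..1}) S) (cylinder_map \<sigma>)"
    unfolding prism_space_def by (intro continuous_map_cylinder_map) (simp add: singular_simplex_def)
  with M show ?case
    by (simp add: prism_def singular_chain_chain_map)
qed (auto simp: prism_diff singular_chain_diff)

lemma chain_map_prism:
  assumes M: "singular_chain (Suc n) (prism_space n) (prism_model n)"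
  shows "chain_map (Suc n) (cylinder_map f) (prism n c) = prism n (chain_map n f c)"
  using subset_UNIV
proof (induction c rule: frag_induction)
  case (one \<sigma>)
  have "chain_map (Suc n) (cylinder_map f) (chain_map (Suc n) (cylinder_map \<sigma>) (prism_model n))
        = chain_map (Suc n) (cylinder_map (simplex_map n f \<sigma>)) (prism_model n)"
    unfolding chain_map_compose[symmetric, THEN fun_cong, unfolded o_def]
    by (rule chain_map_eq[OF M]) (auto simp: prism_space_def cylinder_map_def simplex_map_def)
  then show ?case
    by (simp add: prism_def)
qed (auto simp: prism_diff chain_map_diff)

lemma chain_boundary_prism:
  assumes ok: "prism_model_spec n"
    and prev: "0 < n \<Longrightarrow> singular_chain n (prism_space (n - 1)) (prism_model (n - 1))"
    and c: "singular_chain n S c"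
  shows "chain_boundary (Suc n) (prism n c) =
           chain_map n (Pair 1) c - chain_map n (Pair 0) c - prism (n - 1) (chain_boundary n c)"
  using c unfolding singular_chain_def[of n]
proof (induction c rule: frag_induction)
  case (one \<sigma>)
  then have \<sigma>: "singular_simplex n S \<sigma>" by simp
  have M: "singular_chain (Suc n) (prism_space n) (prism_model n)"
    and dM: "chain_boundary (Suc n) (prism_model n) =
       chain_map n (Pair 1) (simplex_id n) - chain_map n (Pair 0) (simplex_id n)
       - prism (n - 1) (chain_boundary n (simplex_id n))"
    using ok by (auto simp: prism_model_spec_def)
  have ends: "chain_map n (cylinder_map \<sigma>) (chain_map n (Pair t) (simplex_id n)) = chain_map n (Pair t) (frag_of \<sigma>)" for t :: real
  proof -
    have "cylinder_map \<sigma> \<circ> Pair t = Pair t \<circ> \<sigma>"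
      by (auto simp: cylinder_map_def)
    then show ?thesis
      by (metis chain_map_compose comp_apply singular_simplex_chain_map_id[OF \<sigma>])
  qed
  have side: "chain_map n (cylinder_map \<sigma>) (prism (n - 1) (chain_boundary n (simplex_id n)))
              = prism (n - 1) (chain_boundary n (frag_of \<sigma>))"
  proof (cases n)
    case 0
    then show ?thesis by (simp add: chain_boundary_def)
  next
    case (Suc m)
    have "simplex_map n \<sigma> (restrict id (standard_simplex n)) = \<sigma>"
      using singular_simplex_chain_map_id[OF \<sigma>] by (simp add: frag_of_eq)
    then have "chain_map m \<sigma> (chain_boundary n (simplex_id n)) = chain_boundary n (frag_of \<sigma>)"
      using chain_boundary_chain_map[of n "simplex_top n" "simplex_id n" \<sigma>] Suc
      by (simp add: singular_chain_of singular_simplex_simplex_id)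
    then show ?thesis
      using chain_map_prism[of m \<sigma>] prev Suc by simp
  qed
  have "chain_boundary (Suc n) (prism n (frag_of \<sigma>)) = chain_map n (cylinder_map \<sigma>) (chain_boundary (Suc n) (prism_model n))"
    using chain_boundary_chain_map[OF M] by (simp add: prism_def)
  also have "\<dots> = chain_map n (Pair 1) (frag_of \<sigma>) - chain_map n (Pair 0) (frag_of \<sigma>)
                  - prism (n - 1) (chain_boundary n (frag_of \<sigma>))"
    by (simp only: dM chain_map_diff ends side)
  finally show ?case .
qed (auto simp: prism_diff chain_map_diff chain_boundary_diff)

lemma prism_model_spec: "prism_model_spec n"
proof (induction n rule: less_induct)
  case (less n)
  let ?rhs = "chain_map n (Pair 1) (simplex_id n) - chain_map n (Pair 0) (simplex_id n)
              - prism (n - 1) (chain_boundary n (simplex_id n))"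
  have ends: "singular_chain n (prism_space n) (chain_map n (Pair t) (simplex_id n))" if "t \<in> {0..1}" for t :: real
    using that by (intro singular_chain_chain_map[of _ "simplex_top n"])
      (auto simp: prism_space_def singular_chain_of singular_simplex_simplex_id continuous_map_Pair_const)
  have "\<exists>d. singular_chain (Suc n) (prism_space n) d \<and> chain_boundary (Suc n) d = ?rhs"
  proof (cases n)
    case 0
    have "homologous_rel 0 (prism_space 0) {}
            (frag_of (simplex_map 0 (Pair 1) (restrict id (standard_simplex 0))))
            (frag_of (simplex_map 0 (Pair 0) (restrict id (standard_simplex 0))))"
      using 0 ends[of 0] ends[of 1]
      by (intro iso_integer_zeroth_homology_group_aux contractible_imp_path_connected_space contractible_prism_space)
        (auto simp: singular_chain_of)
    then show ?thesis
      using 0 by (simp add: homologous_rel_def singular_boundary chain_boundary_def)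
  next
    case (Suc m)
    have okm: "prism_model_spec m" using less Suc by simp
    have Mm: "singular_chain (Suc m) (prism_space m) (prism_model m)"
      using okm by (simp add: prism_model_spec_def)
    have prev: "0 < m \<Longrightarrow> singular_chain m (prism_space (m - 1)) (prism_model (m - 1))"
      using less[of "m - 1"] Suc by (simp add: prism_model_spec_def)
    have bd: "singular_chain m (simplex_top n) (chain_boundary n (simplex_id n))"
      using singular_chain_boundary_alt[of m "simplex_top n" "simplex_id n"] Suc
      by (simp add: singular_chain_of singular_simplex_simplex_id)
    have "singular_chain n (prism_space n) ?rhs"
      using singular_chain_prism[OF Mm bd] ends Suc
      by (auto intro!: singular_chain_diff simp: prism_space_def)
    moreover have "chain_boundary n ?rhs = 0"
      using chain_boundary_prism[OF okm prev bd] chain_boundary_boundary_alt[of m "simplex_top n" "simplex_id n"] Suc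
      by (simp add: chain_boundary_diff chain_boundary_chain_map[of _ "simplex_top n"] singular_chain_of
          singular_simplex_simplex_id del: chain_map_of)
    ultimately show ?thesis
      using contractible_cycle_is_boundary[OF contractible_prism_space] Suc by (metis nat.simps(3))
  qed
  then show ?case
    unfolding prism_model_spec_def prism_model_eq[of n] by (rule someI_ex)
qed

lemma homotopic_imp_chain_homotopy:
  assumes "homotopic_with (\<lambda>h. True) S U f g"
  obtains D :: "nat \<Rightarrow> 'a chain \<Rightarrow> 'b chain" where
    "\<And>n a b. D n (a - b) = D n a - D n b"
    "\<And>n c. singular_chain n S c \<Longrightarrow> singular_chain (Suc n) U (D n c)"
    "\<And>n c. singular_chain n S c \<Longrightarrow>
       chain_boundary (Suc n) (D n c) = chain_map n g c - chain_map n f c - D (n - 1) (chain_boundary n c)"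
proof -
  obtain h where h: "continuous_map (prod_topology (top_of_set {0..1::real}) S) U h"
    and h0: "\<forall>x. h (0, x) = f x" and h1: "\<forall>x. h (1, x) = g x"
    using assms unfolding homotopic_with_def by blast
  define D where "D n c = chain_map (Suc n) h (prism n c)" for n c
  have "D n (a - b) = D n a - D n b" for n a b
    by (simp add: D_def prism_diff chain_map_diff)
  moreover have "singular_chain (Suc n) U (D n c)" if "singular_chain n S c" for n c
    using singular_chain_prism[OF _ that] prism_model_spec[of n] h
    by (simp add: D_def prism_model_spec_def singular_chain_chain_map)
  moreover have "chain_boundary (Suc n) (D n c) = chain_map n g c - chain_map n f c - D (n - 1) (chain_boundary n c)"
    if c: "singular_chain n S c" for n c
  proof -
    have M: "singular_chain (Suc n) (prism_space n) (prism_model n)"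
      using prism_model_spec[of n] by (simp add: prism_model_spec_def)
    have prev: "0 < n \<Longrightarrow> singular_chain n (prism_space (n - 1)) (prism_model (n - 1))"
      using prism_model_spec[of "n - 1"] by (simp add: prism_model_spec_def)
    have "chain_boundary (Suc n) (D n c) = chain_map n h (chain_boundary (Suc n) (prism n c))"
      using chain_boundary_chain_map[OF singular_chain_prism[OF M c]] by (simp add: D_def)
    also have "\<dots> = chain_map n (h \<circ> Pair 1) c - chain_map n (h \<circ> Pair 0) c
                      - chain_map n h (prism (n - 1) (chain_boundary n c))"
      by (simp add: chain_boundary_prism[OF prism_model_spec prev c] chain_map_diff chain_map_compose)
    also have "chain_map n h (prism (n - 1) (chain_boundary n c)) = D (n - 1) (chain_boundary n c)"
      by (cases n) (simp_all add: D_def chain_boundary_def)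
    also have "h \<circ> Pair 1 = g"
      using h1 by auto
    also have "h \<circ> Pair 0 = f"
      using h0 by auto
    finally show ?thesis .
  qed
  ultimately show thesis
    using that by blast
qed

lemma is_coboundary_pullback_diff:
  assumes hom: "homotopic_with (\<lambda>h. True) S U f g" and c: "is_cocycle U n c"
  shows "is_coboundary S n (\<lambda>\<sigma>. pullback n g c \<sigma> - pullback n f c \<sigma>)"
proof -
  obtain D where D_diff: "\<And>n a b. D n (a - b) = D n a - D n b"
    and D_chain: "\<And>n c. singular_chain n S c \<Longrightarrow> singular_chain (Suc n) U (D n c)"
    and D_boundary: "\<And>n c. singular_chain n S c \<Longrightarrow>
       chain_boundary (Suc n) (D n c) = chain_map n g c - chain_map n f c - D (n - 1) (chain_boundary n c)"
    using homotopic_imp_chain_homotopy[OF hom] by blast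
  define b where "b \<tau> = cochain_eval c (D (n - 1) (frag_of \<tau>))" for \<tau>
  have b_eval: "cochain_eval c (D (n - 1) x) = cochain_eval b x" for x
    unfolding b_def by (rule additive_eq_cochain_eval) (simp add: D_diff cochain_eval_diff)
  have eq: "pullback n g c \<sigma> - pullback n f c \<sigma> = cochain_eval b (chain_boundary n (frag_of \<sigma>))"
    if \<sigma>: "singular_simplex n S \<sigma>" for \<sigma>
  proof -
    have \<sigma>': "singular_chain n S (frag_of \<sigma>)"
      using \<sigma> by (simp add: singular_chain_of)
    have "0 = cochain_eval c (chain_boundary (Suc n) (D n (frag_of \<sigma>)))"
      using cochain_eval_cocycle_boundary[OF c D_chain[OF \<sigma>']] by simp
    also have "\<dots> = pullback n g c \<sigma> - pullback n f c \<sigma> - cochain_eval b (chain_boundary n (frag_of \<sigma>))"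
      unfolding D_boundary[OF \<sigma>'] cochain_eval_diff b_eval by (simp add: pullback_def)
    finally show ?thesis
      by (simp add: algebra_simps)
  qed
  show ?thesis
  proof (cases "n = 0")
    case True
    then show ?thesis
      using eq by (simp add: is_coboundary_iff chain_boundary_def)
  next
    case False
    then show ?thesis
      using eq by (intro is_coboundaryI[where b=b]) (simp_all add: cochain_eval_chain_boundary_of)
  qed
qed

lemma singular_face_simplex_map_eq:
  "0 < n \<Longrightarrow> k \<le> n \<Longrightarrow>
     singular_face n k (simplex_map n F \<sigma>) = simplex_map (n - 1) F (singular_face n k \<sigma>)"
  by (auto simp: simplex_map_def singular_face_def fun_eq_iff simplical_face_in_standard_simplex)

lemma is_coboundary_pullback:
  assumes F: "continuous_map S Y F" and c: "is_coboundary Y n c"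
  shows "is_coboundary S n (pullback n F c)"
proof (cases "n = 0")
  case True
  then show ?thesis
    using c singular_simplex_simplex_map[OF _ F] by (auto simp: is_coboundary_iff pullback_def)
next
  case False
  then obtain b where b: "\<And>\<tau>. singular_simplex n Y \<tau> \<Longrightarrow> c \<tau> = coboundary n b \<tau>"
    using c by (auto simp: is_coboundary_iff)
  have "pullback n F c \<sigma> = coboundary n (pullback (n - 1) F b) \<sigma>" if "singular_simplex n S \<sigma>" for \<sigma>
    using b[OF singular_simplex_simplex_map[OF that F]] False
    by (simp add: pullback_def coboundary_def singular_face_simplex_map_eq)
  then show ?thesis
    using False by (auto intro: is_coboundaryI)
qed

lemma is_coboundary_of_homotopic_factorization:
  assumes hom: "homotopic_with (\<lambda>h. True) S W id (D \<circ> F)"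
    and F: "continuous_map S Y F"
    and c: "is_cocycle W n c"
    and pb: "is_coboundary Y n (pullback n D c)"
  shows "is_coboundary S n c"
proof -
  have "is_coboundary S n (\<lambda>\<sigma>. pullback n F (pullback n D c) \<sigma> - (pullback n (D \<circ> F) c \<sigma> - pullback n id c \<sigma>))"
    by (intro is_coboundary_diff is_coboundary_pullback[OF F pb] is_coboundary_pullback_diff[OF hom c])
  then show ?thesis
    by (rule is_coboundary_cong)
      (simp add: pullback_def singular_simplex_def simplex_map_compose extensional_restrict)
qed

section \<open>Cocycles vanishing on small simplices\<close>

definition subordinate_chain :: "'a set set \<Rightarrow> nat \<Rightarrow> 'a chain \<Rightarrow> bool" where
  "subordinate_chain \<C> p x \<longleftrightarrow> (\<forall>f\<in>Poly_Mapping.keys x. \<exists>V\<in>\<C>. f \<in> standard_simplex p \<rightarrow> V)"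

lemma singular_chain_subdivision_power:
  "singular_chain p X c \<Longrightarrow> singular_chain p X ((singular_subdivision p ^^ i) c)"
  by (induction i) (auto intro: singular_chain_singular_subdivision)

lemma chain_boundary_subdivision_power:
  "singular_chain p X c \<Longrightarrow>
     chain_boundary p ((singular_subdivision p ^^ i) c) = (singular_subdivision (p - 1) ^^ i) (chain_boundary p c)"
proof (induction i)
  case (Suc i)
  then show ?case
    using chain_boundary_singular_subdivision[OF singular_chain_subdivision_power[OF Suc.prems, of i]] by simp
qed simp

lemma subordinate_chain_natural_operator:
  assumes h_diff: "\<And>c1 c2. h (c1 - c2) = h c1 - h c2"
    and h_chain: "\<And>X c. singular_chain p X c \<Longrightarrow> singular_chain q X (h c)"
    and y: "singular_chain p W y" "subordinate_chain \<C> p y"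
  shows "subordinate_chain \<C> q (h y)"
proof -
  have "Poly_Mapping.keys y \<subseteq> {\<tau>. singular_simplex p W \<tau> \<and> (\<exists>V\<in>\<C>. \<tau> \<in> standard_simplex p \<rightarrow> V)}"
    using y unfolding subordinate_chain_def singular_chain_def by blast
  then show ?thesis
  proof (induction rule: frag_induction)
    case zero
    then show ?case using h_diff[of 0 0] by (simp add: subordinate_chain_def)
  next
    case (one \<tau>)
    then obtain V where "V \<in> \<C>" "singular_chain q (subtopology W V) (h (frag_of \<tau>))"
      using h_chain by (auto simp: singular_chain_of singular_simplex_subtopology image_subset_iff_funcset)
    then show ?case
      unfolding subordinate_chain_def singular_chain_def
      by (auto simp: subset_iff singular_simplex_subtopology Pi_iff image_subset_iff)
  next
    case (diff a b)
    then show ?case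
      using keys_diff[of "h a" "h b"] by (auto simp: h_diff subordinate_chain_def)
  qed
qed

lemma coboundary_cong_faces:
  "(\<And>k. k \<le> n \<Longrightarrow> a (singular_face n k \<sigma>) = b (singular_face n k \<sigma>)) \<Longrightarrow> coboundary n a \<sigma> = coboundary n b \<sigma>"
  by (simp add: coboundary_def)

text \<open>Iterated barycentric subdivision, together with the chain homotopy between subdivision and
  the identity, telescopes a simplex down to small ones on which c vanishes.\<close>
lemma is_coboundary_if_vanishes_on_small:
  fixes c :: "('a, 'r::comm_ring_1) cochain"
  assumes \<C>: "\<And>U. U \<in> \<C> \<Longrightarrow> openin W U" and cover: "topspace W \<subseteq> \<Union>\<C>"
    and cocycle: "is_cocycle W n c"
    and vanish: "\<And>\<sigma> V. singular_simplex n W \<sigma> \<Longrightarrow> V \<in> \<C> \<Longrightarrow> \<sigma> \<in> standard_simplex n \<rightarrow> V \<Longrightarrow> c \<sigma> = 0"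
  shows "is_coboundary W n c"
proof -
  obtain h :: "nat \<Rightarrow> 'a chain \<Rightarrow> 'a chain" where
        h_diff: "\<And>p c1 c2. h p (c1 - c2) = h p c1 - h p c2"
    and h_chain: "\<And>p X c. singular_chain p X c \<Longrightarrow> singular_chain (Suc p) X (h p c)"
    and h_boundary: "\<And>p X c. singular_chain p X c \<Longrightarrow>
          chain_boundary (Suc p) (h p c) + h (p - 1) (chain_boundary p c) = singular_subdivision p c - c"
    using chain_homotopic_singular_subdivision by (metis One_nat_def)
  let ?sd = "\<lambda>p i. singular_subdivision p ^^ i"
  have "\<exists>N. \<forall>i\<ge>N. subordinate_chain \<C> p (?sd p i (frag_of \<sigma>))" if "singular_simplex p W \<sigma>" for p \<sigma>
    using sufficient_iterated_singular_subdivision_exists[OF \<C> cover, of p "frag_of \<sigma>"] that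
    by (metis singular_chain_of subordinate_chain_def)
  then obtain depth where depth:
    "\<And>p \<sigma> i. singular_simplex p W \<sigma> \<Longrightarrow> depth p \<sigma> \<le> i \<Longrightarrow> subordinate_chain \<C> p (?sd p i (frag_of \<sigma>))"
    by metis
  have eval_small: "cochain_eval c y = 0" if "singular_chain n W y" "subordinate_chain \<C> n y" for y
    using that vanish unfolding subordinate_chain_def singular_chain_def by (intro cochain_eval_eq_0) blast
  show ?thesis
  proof (cases n)
    case 0
    have "c \<sigma> = 0" if "singular_simplex 0 W \<sigma>" for \<sigma>
    proof -
      have "?sd 0 i (frag_of \<sigma>) = frag_of \<sigma>" for i
        using that by (induction i) (simp_all add: singular_subdivision_zero singular_chain_of)
      then show ?thesis
        using eval_small[of "frag_of \<sigma>"] depth[OF that order_refl] that 0 by (simp add: singular_chain_of)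
    qed
    then show ?thesis
      using 0 by (simp add: is_coboundary_iff)
  next
    case (Suc m)
    define t where "t \<tau> i = - cochain_eval c (h m (?sd m i (frag_of \<tau>)))" for \<tau> i
    have t_small: "t \<tau> i = 0" if "singular_simplex m W \<tau>" "depth m \<tau> \<le> i" for \<tau> i
    proof -
      have "singular_chain m W (?sd m i (frag_of \<tau>))"
        using that by (simp add: singular_chain_subdivision_power singular_chain_of)
      then have "singular_chain n W (h m (?sd m i (frag_of \<tau>)))"
        and "subordinate_chain \<C> n (h m (?sd m i (frag_of \<tau>)))"
        using h_chain depth[OF that] Suc
        by (auto intro: subordinate_chain_natural_operator[where h="h m" and p=m and W=W] h_diff)
      then show ?thesis
        unfolding t_def by (simp add: eval_small)
    qed
    have "c \<sigma> = coboundary n (\<lambda>\<tau>. \<Sum>i<depth m \<tau>. t \<tau> i) \<sigma>" if \<sigma>: "singular_simplex n W \<sigma>" for \<sigma>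
    proof -
      define N where "N = max (depth n \<sigma>) (Max ((\<lambda>k. depth m (singular_face n k \<sigma>)) ` {..n}))"
      define y where "y i = ?sd n i (frag_of \<sigma>)" for i
      have y: "singular_chain n W (y i)" for i
        using \<sigma> by (simp add: y_def singular_chain_subdivision_power singular_chain_of)
      have step: "cochain_eval c (y i) - cochain_eval c (y (Suc i)) = coboundary n (\<lambda>\<tau>. t \<tau> i) \<sigma>" for i
      proof -
        have chain: "y (Suc i) - y i = chain_boundary (Suc n) (h n (y i)) + h m (?sd m i (chain_boundary n (frag_of \<sigma>)))"
          using h_boundary[OF y, of i] chain_boundary_subdivision_power[of n W "frag_of \<sigma>" i] \<sigma> Suc
          by (simp add: y_def singular_chain_of)
        have "cochain_eval c (y i) - cochain_eval c (y (Suc i)) = - cochain_eval c (y (Suc i) - y i)"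
          by (simp add: cochain_eval_diff)
        also have "\<dots> = - cochain_eval c (h m (?sd m i (chain_boundary n (frag_of \<sigma>))))"
          unfolding chain cochain_eval_add cochain_eval_cocycle_boundary[OF cocycle h_chain[OF y]] by simp
        also have "\<dots> = cochain_eval (\<lambda>\<tau>. t \<tau> i) (chain_boundary n (frag_of \<sigma>))"
          unfolding t_def
          by (rule additive_eq_cochain_eval) (simp add: h_diff singular_subdivision_power_diff cochain_eval_diff)
        also have "\<dots> = coboundary n (\<lambda>\<tau>. t \<tau> i) \<sigma>"
          using Suc by (simp add: cochain_eval_chain_boundary_of)
        finally show ?thesis .
      qed
      have "cochain_eval c (y N) = 0"
        using depth[OF \<sigma>, of N] by (intro eval_small y) (simp add: y_def N_def)
      then have "c \<sigma> = (\<Sum>i<N. coboundary n (\<lambda>\<tau>. t \<tau> i) \<sigma>)"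
        using sum_lessThan_telescope'[of "\<lambda>i. cochain_eval c (y i)" N] step by (simp add: y_def)
      also have "\<dots> = coboundary n (\<lambda>\<tau>. \<Sum>i<depth m \<tau>. t \<tau> i) \<sigma>"
        unfolding coboundary_sum[symmetric]
      proof (rule coboundary_cong_faces)
        fix k assume "k \<le> n"
        then have face: "singular_simplex m W (singular_face n k \<sigma>)" and "depth m (singular_face n k \<sigma>) \<le> N"
          using singular_simplex_singular_face[OF \<sigma>, of k] Suc by (auto simp: N_def intro: le_max_iff_disj[THEN iffD2] Max_ge)
        then show "(\<Sum>i<N. t (singular_face n k \<sigma>) i) = (\<Sum>i<depth m (singular_face n k \<sigma>). t (singular_face n k \<sigma>) i)"
          by (intro sum.mono_neutral_right) (auto intro: t_small)
      qed
      finally show ?thesis .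
    qed
    then show ?thesis
      using Suc by (auto intro: is_coboundaryI)
  qed
qed

section \<open>Products of classes vanishing on the members of an open cover\<close>

lemma class_zero_zero: "class_zero T (0 :: ('a, 'r::comm_ring_1) total_cochain)"
  by (auto simp: class_zero_def is_coboundary_iff coboundary_def intro!: exI[of _ "\<lambda>_. 0"])

lemma degreewise_cocycle_vanishing_on_subspace:
  assumes z: "degreewise_cocycle T z" and zV: "class_zero (subtopology T V) z"
  obtains z' where "degreewise_cocycle T z'" "class_zero T (z - z')"
    "\<And>n \<sigma>. singular_simplex n (subtopology T V) \<sigma> \<Longrightarrow> z' n \<sigma> = 0"
proof -
  obtain \<beta> where \<beta>: "\<And>d \<tau>. singular_simplex (Suc d) (subtopology T V) \<tau> \<Longrightarrow>
                        z (Suc d) \<tau> = coboundary (Suc d) (\<beta> d) \<tau>"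
    and z0: "\<And>\<tau>. singular_simplex 0 (subtopology T V) \<tau> \<Longrightarrow> z 0 \<tau> = 0"
    using class_zeroE[OF zV] by blast
  define D :: "('a, 'b) total_cochain" where
    "D n = (case n of 0 \<Rightarrow> (\<lambda>\<sigma>. 0) | Suc d \<Rightarrow> coboundary (Suc d) (\<beta> d))" for n
  have "is_cocycle T n (D n)" for n
  proof (cases n)
    case 0
    then show ?thesis by (simp add: D_def is_cocycle_iff_coboundary coboundary_def)
  qed (simp add: D_def is_cocycle_coboundary)
  then have "degreewise_cocycle T D"
    by (simp add: degreewise_cocycle_def)
  then have "degreewise_cocycle T (z - D)"
    using z by (simp add: degreewise_cocycle_diff)
  moreover have "class_zero T (z - (z - D))"
    by (auto simp: class_zero_def D_def is_coboundary_iff split: nat.split)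
  moreover have "(z - D) n \<sigma> = 0" if "singular_simplex n (subtopology T V) \<sigma>" for n \<sigma>
    using that \<beta> z0 by (cases n) (simp_all add: D_def)
  ultimately show thesis
    using that by blast
qed

lemma class_zero_total_prod_of_open_cover:
  assumes V: "\<And>j. j < m \<Longrightarrow> openin T (V j)" and cover: "topspace T \<subseteq> (\<Union>j<m. V j)" and "m \<le> k"
    and z: "\<And>i. i < k \<Longrightarrow> degreewise_cocycle T (z i)"
    and zV: "\<And>j. j < m \<Longrightarrow> class_zero (subtopology T (V j)) (z j)"
  shows "class_zero T (total_prod (map z [0..<k]))"
proof -
  have "\<exists>w. degreewise_cocycle T w \<and> class_zero T (z i - w) \<and>
            (i < m \<longrightarrow> (\<forall>n \<sigma>. singular_simplex n (subtopology T (V i)) \<sigma> \<longrightarrow> w n \<sigma> = 0))"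
    if "i < k" for i
  proof (cases "i < m")
    case True
    then show ?thesis
      using degreewise_cocycle_vanishing_on_subspace[OF z[OF that] zV[OF True]] by metis
  next
    case False
    then show ?thesis
      using z[OF that] class_zero_zero by (intro exI[of _ "z i"]) simp
  qed
  then obtain z' where z': "\<And>i. i < k \<Longrightarrow> degreewise_cocycle T (z' i)"
    "\<And>i. i < k \<Longrightarrow> class_zero T (z i - z' i)"
    and z'V: "\<And>j n \<sigma>. j < m \<Longrightarrow> singular_simplex n (subtopology T (V j)) \<sigma> \<Longrightarrow> z' j n \<sigma> = 0"
    using \<open>m \<le> k\<close> by (metis order.strict_trans2)
  have "class_zero T (total_prod (map z [0..<k]) - total_prod (map z' [0..<k]))"
    using z z' by (intro class_zero_total_prod_diff) (simp add: list_all2_conv_all_nth)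
  moreover have "class_zero T (total_prod (map z' [0..<k]))"
    unfolding class_zero_def
  proof
    fix n
    show "is_coboundary T n (total_prod (map z' [0..<k]) n)"
    proof (rule is_coboundary_if_vanishes_on_small[where \<C> = "V ` {..<m}"])
      have "degreewise_cocycle T (total_prod (map z' [0..<k]))"
        using z' by (intro degreewise_cocycle_total_prod) auto
      then show "is_cocycle T n (total_prod (map z' [0..<k]) n)"
        by (simp add: degreewise_cocycle_def)
    next
      fix \<sigma> W assume \<sigma>: "singular_simplex n T \<sigma>" and "W \<in> V ` {..<m}" "\<sigma> \<in> standard_simplex n \<rightarrow> W"
      then obtain j where "j < m" "singular_simplex n (subtopology T (V j)) \<sigma>"
        by (auto simp: singular_simplex_subtopology image_subset_iff_funcset)
      then show "total_prod (map z' [0..<k]) n \<sigma> = 0"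
        using z'V \<open>m \<le> k\<close> by (intro total_prod_vanishes[where w = "z' j"]) auto
    qed (use V cover in auto)
  qed
  ultimately have "class_zero T ((total_prod (map z [0..<k]) - total_prod (map z' [0..<k])) + total_prod (map z' [0..<k]))"
    by (rule class_zero_add)
  then show ?thesis
    by simp
qed

section \<open>Orbit spaces\<close>

lemma gspace_act_in_topspace:
  assumes "gspace G A act" "g \<in> topspace (gtop G)" "x \<in> topspace A"
  shows "act g x \<in> topspace A"
  using assms continuous_map_image_subset_topspace[of "prod_topology (gtop G) A" A "\<lambda>(g, x). act g x"]
  by (force simp: gspace_def)

lemma continuous_map_gspace_act:
  assumes "gspace G A act" "g \<in> topspace (gtop G)"
  shows "continuous_map A A (act g)"
proof -
  have "continuous_map A (prod_topology (gtop G) A) (\<lambda>x. (g, x))"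
    using assms by (auto intro!: continuous_map_pairedI)
  then show ?thesis
    using continuous_map_compose[of A "prod_topology (gtop G) A" "\<lambda>x. (g, x)" A "\<lambda>(g, x). act g x"] assms
    by (simp add: gspace_def o_def)
qed

lemma in_orbit_self:
  assumes "topological_group G" "gspace G A act" "x \<in> topspace A"
  shows "x \<in> orbit G act x"
  using assms unfolding orbit_def topological_group_def gspace_def
  by (metis image_eqI)

lemma orbit_eq_if_in_orbit:
  assumes G: "topological_group G" and A: "gspace G A act" and x: "x \<in> topspace A"
    and y: "y \<in> orbit G act x"
  shows "orbit G act y = orbit G act x"
proof -
  obtain g where g: "g \<in> topspace (gtop G)" "y = act g x"
    using y by (auto simp: orbit_def)
  have mult: "gmult G h k \<in> topspace (gtop G)" if "h \<in> topspace (gtop G)" "k \<in> topspace (gtop G)" for h k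
    using G that by (simp add: topological_group_def)
  have ginv: "ginv G g \<in> topspace (gtop G)" using G g by (simp add: topological_group_def)
  show ?thesis
  proof
    show "orbit G act y \<subseteq> orbit G act x"
    proof
      fix z assume "z \<in> orbit G act y"
      then obtain h where h: "h \<in> topspace (gtop G)" "z = act h y" by (auto simp: orbit_def)
      then have "z = act (gmult G h g) x"
        using A g x by (simp add: gspace_def)
      then show "z \<in> orbit G act x"
        using mult[OF h(1) g(1)] by (auto simp: orbit_def)
    qed
  next
    show "orbit G act x \<subseteq> orbit G act y"
    proof
      fix z assume "z \<in> orbit G act x"
      then obtain h where h: "h \<in> topspace (gtop G)" "z = act h x" by (auto simp: orbit_def)
      have "act (gmult G h (ginv G g)) y = act (gmult G h (ginv G g)) (act g x)" using g by simp
      also have "\<dots> = act (gmult G (gmult G h (ginv G g)) g) x"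
        using A g x mult[OF h(1) ginv] by (simp add: gspace_def)
      also have "gmult G (gmult G h (ginv G g)) g = h"
        using G h g ginv by (simp add: topological_group_def)
      finally have "z = act (gmult G h (ginv G g)) y" using h by simp
      then show "z \<in> orbit G act y"
        using mult[OF h(1) ginv] by (auto simp: orbit_def)
    qed
  qed
qed

lemma Union_orbits_invariant:
  assumes G: "topological_group G" and A: "gspace G A act" and N: "N \<subseteq> topspace A"
    and inv: "g_invariant G act N"
  shows "\<Union>(orbit G act ` N) = N"
proof
  show "\<Union>(orbit G act ` N) \<subseteq> N"
    using inv by (auto simp: orbit_def g_invariant_def)
  show "N \<subseteq> \<Union>(orbit G act ` N)"
    using in_orbit_self[OF G A] N by blast
qed

lemma g_invariant_topspace:
  assumes "gspace G A act" shows "g_invariant G act (topspace A)"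
  using gspace_act_in_topspace[OF assms] by (auto simp: g_invariant_def)

lemma topspace_orbit_space:
  assumes G: "topological_group G" and A: "gspace G A act"
  shows "topspace (orbit_space G A act) = orbit G act ` topspace A"
proof -
  have "\<Union>(orbit G act ` topspace A) = topspace A"
    by (rule Union_orbits_invariant[OF G A subset_refl g_invariant_topspace[OF A]])
  then have "orbit G act ` topspace A \<in> {U. U \<subseteq> orbit G act ` topspace A \<and> openin A (\<Union>U)}"
    by simp
  then show ?thesis
    unfolding orbit_space_def topology_generated_by_topspace by blast
qed

lemma openin_orbit_image:
  assumes G: "topological_group G" and A: "gspace G A act" and N: "openin A N"
  shows "openin (orbit_space G A act) (orbit G act ` N)"
  unfolding orbit_space_def
proof (rule topology_generated_by_Basis, safe)
  show "x \<in> N \<Longrightarrow> orbit G act x \<in> orbit G act ` topspace A" for x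
    using N openin_subset by blast
  show "openin A (\<Union>(orbit G act ` N))"
  proof (subst openin_subopen, safe)
    fix y x assume x: "x \<in> N" and y: "y \<in> orbit G act x"
    then obtain g where g: "g \<in> topspace (gtop G)" "y = act g x" by (auto simp: orbit_def)
    have xA: "x \<in> topspace A" using x N openin_subset by blast
    have gi: "ginv G g \<in> topspace (gtop G)" using G g by (simp add: topological_group_def)
    define M where "M = {z \<in> topspace A. act (ginv G g) z \<in> N}"
    have "openin A M"
      unfolding M_def using continuous_map_gspace_act[OF A gi] N by (rule openin_continuous_map_preimage)
    moreover have "y \<in> M"
    proof -
      have "act (ginv G g) y = act (gmult G (ginv G g) g) x"
        using A g gi xA by (simp add: gspace_def)
      also have "\<dots> = x" using G A g xA by (simp add: topological_group_def gspace_def)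
      finally show ?thesis using g gspace_act_in_topspace[OF A g(1) xA] x by (simp add: M_def)
    qed
    moreover have "M \<subseteq> \<Union>(orbit G act ` N)"
    proof
      fix z assume z: "z \<in> M"
      have "act g (act (ginv G g) z) = act (gmult G g (ginv G g)) z"
        using A g gi z by (simp add: gspace_def M_def)
      also have "\<dots> = z" using G A g z by (simp add: topological_group_def gspace_def M_def)
      finally have "z \<in> orbit G act (act (ginv G g) z)"
        using g unfolding orbit_def by (metis image_eqI)
      then show "z \<in> \<Union>(orbit G act ` N)" using z by (auto simp: M_def)
    qed
    ultimately show "\<exists>T. openin A T \<and> y \<in> T \<and> T \<subseteq> \<Union>(orbit G act ` N)" by blast
  qed
qed

text \<open>The map of orbit sets induced by \<phi> evaluates \<phi> at an arbitrary representative; the result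
  is independent of that choice when \<phi> is equivariant.\<close>
definition induced_orbit_map :: "('g, 'm) tgroup_scheme \<Rightarrow> ('g \<Rightarrow> 'b \<Rightarrow> 'b) \<Rightarrow> ('a \<Rightarrow> 'b) \<Rightarrow> 'a set \<Rightarrow> 'b set" where
  "induced_orbit_map G actB \<phi> Ob = orbit G actB (\<phi> (SOME a. a \<in> Ob))"

lemma induced_orbit_map_orbit:
  assumes G: "topological_group G" and A: "gspace G A actA" and B: "gspace G B actB"
    and a: "a \<in> topspace A" and \<phi>a: "\<phi> a \<in> topspace B"
    and eq: "\<And>g. g \<in> topspace (gtop G) \<Longrightarrow> \<phi> (actA g a) = actB g (\<phi> a)"
  shows "induced_orbit_map G actB \<phi> (orbit G actA a) = orbit G actB (\<phi> a)"
proof -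
  have "(SOME x. x \<in> orbit G actA a) \<in> orbit G actA a"
    using in_orbit_self[OF G A a] by (rule someI)
  then obtain g where g: "g \<in> topspace (gtop G)" "(SOME x. x \<in> orbit G actA a) = actA g a"
    by (auto simp: orbit_def)
  have "actB g (\<phi> a) \<in> orbit G actB (\<phi> a)"
    using g by (auto simp: orbit_def)
  then show ?thesis
    unfolding induced_orbit_map_def g(2) eq[OF g(1)] by (rule orbit_eq_if_in_orbit[OF G B \<phi>a])
qed

lemma orbit_in_iff_in_Union:
  assumes G: "topological_group G" and B: "gspace G B act"
    and b: "b \<in> topspace B" and \<U>: "\<U> \<subseteq> orbit G act ` topspace B"
  shows "orbit G act b \<in> \<U> \<longleftrightarrow> b \<in> \<Union>\<U>"
proof
  assume "b \<in> \<Union>\<U>"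
  then obtain c where "c \<in> topspace B" "orbit G act c \<in> \<U>" "b \<in> orbit G act c"
    using \<U> by auto
  then show "orbit G act b \<in> \<U>"
    using orbit_eq_if_in_orbit[OF G B] by simp
qed (use in_orbit_self[OF G B b] in auto)

lemma induced_orbit_map_orbit_param:
  assumes G: "topological_group G" and A: "gspace G A actA" and B: "gspace G B actB"
    and A': "A' \<subseteq> topspace A" and \<phi>: "continuous_map (prod_topology T (subtopology A A')) B \<phi>"
    and eq: "\<And>g a. g \<in> topspace (gtop G) \<Longrightarrow> a \<in> A' \<Longrightarrow> \<phi> (t, actA g a) = actB g (\<phi> (t, a))"
    and t: "t \<in> topspace T" and a: "a \<in> A'"
  shows "induced_orbit_map G actB (\<lambda>a. \<phi> (t, a)) (orbit G actA a) = orbit G actB (\<phi> (t, a))"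
proof (rule induced_orbit_map_orbit[OF G A B])
  show "\<phi> (t, a) \<in> topspace B"
    using continuous_map_image_subset_topspace[OF \<phi>] t a A' by auto
qed (use A' a eq in auto)

lemma continuous_map_induced_orbit_map:
  assumes G: "topological_group G" and A: "gspace G A actA" and B: "gspace G B actB"
    and A': "openin A A'" and inv: "g_invariant G actA A'"
    and \<phi>: "continuous_map (prod_topology T (subtopology A A')) B \<phi>"
    and eq: "\<And>t g a. t \<in> topspace T \<Longrightarrow> g \<in> topspace (gtop G) \<Longrightarrow> a \<in> A' \<Longrightarrow>
                \<phi> (t, actA g a) = actB g (\<phi> (t, a))"
  shows "continuous_map (prod_topology T (subtopology (orbit_space G A actA) (orbit G actA ` A')))
           (orbit_space G B actB) (\<lambda>(t, Ob). induced_orbit_map G actB (\<lambda>a. \<phi> (t, a)) Ob)"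
    (is "continuous_map ?D _ ?\<Phi>")
proof -
  have A'sub: "A' \<subseteq> topspace A" using A' openin_subset by blast
  have \<phi>in: "\<phi> (t, a) \<in> topspace B" if "t \<in> topspace T" "a \<in> A'" for t a
    using continuous_map_image_subset_topspace[OF \<phi>] that A'sub by auto
  have key: "?\<Phi> (t, orbit G actA a) = orbit G actB (\<phi> (t, a))" if "t \<in> topspace T" "a \<in> A'" for t a
    using induced_orbit_map_orbit_param[OF G A B A'sub \<phi>] eq that by simp
  have topD: "topspace ?D = topspace T \<times> orbit G actA ` A'"
    using A'sub by (auto simp: topspace_orbit_space[OF G A])
  show ?thesis
    unfolding orbit_space_def[of G B]
  proof (rule continuous_on_generated_topo)
    show "?\<Phi> ` topspace ?D \<subseteq> \<Union>{U. U \<subseteq> orbit G actB ` topspace B \<and> openin B (\<Union>U)}"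
      using topspace_orbit_space[OF G B] unfolding orbit_space_def topology_generated_by_topspace
      using key \<phi>in topD by auto
  next
    fix \<U> assume "\<U> \<in> {U. U \<subseteq> orbit G actB ` topspace B \<and> openin B (\<Union>U)}"
    then have \<U>: "\<U> \<subseteq> orbit G actB ` topspace B" "openin B (\<Union>\<U>)" by auto
    have inU: "?\<Phi> (t, orbit G actA a) \<in> \<U> \<longleftrightarrow> \<phi> (t, a) \<in> \<Union>\<U>" if "t \<in> topspace T" "a \<in> A'" for t a
      using key[OF that] orbit_in_iff_in_Union[OF G B \<phi>in[OF that] \<U>(1)] by simp
    define N where "N = {p \<in> topspace (prod_topology T (subtopology A A')). \<phi> p \<in> \<Union>\<U>}"
    have N: "openin (prod_topology T (subtopology A A')) N"
      unfolding N_def by (rule openin_continuous_map_preimage[OF \<phi> \<U>(2)])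
    show "openin ?D (?\<Phi> -` \<U> \<inter> topspace ?D)"
      unfolding openin_prod_topology_alt
    proof (intro allI impI)
      fix t Ob assume tO: "(t, Ob) \<in> ?\<Phi> -` \<U> \<inter> topspace ?D"
      then obtain a where a: "a \<in> A'" "Ob = orbit G actA a" and t: "t \<in> topspace T"
        using topD by auto
      then have "(t, a) \<in> N" using tO inU[OF t a(1)] A'sub by (auto simp: N_def)
      then obtain U1 V1 where UV: "openin T U1" "openin (subtopology A A') V1" "t \<in> U1" "a \<in> V1" "U1 \<times> V1 \<subseteq> N"
        using N unfolding openin_prod_topology_alt by meson
      have V1A: "openin A V1" using UV(2) A' openin_trans_full by blast
      have V1A': "V1 \<subseteq> A'" using UV(2) openin_subset by fastforce
      have "openin (subtopology (orbit_space G A actA) (orbit G actA ` A')) (orbit G actA ` V1)"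
        unfolding openin_subtopology
        using openin_orbit_image[OF G A V1A] V1A' by blast
      moreover have "U1 \<times> orbit G actA ` V1 \<subseteq> ?\<Phi> -` \<U> \<inter> topspace ?D"
      proof clarify
        fix t' a' assume "t' \<in> U1" "a' \<in> V1"
        moreover have "t' \<in> topspace T" using \<open>t' \<in> U1\<close> UV(1) openin_subset by blast
        ultimately show "(t', orbit G actA a') \<in> ?\<Phi> -` \<U> \<inter> topspace ?D"
          using UV(5) V1A' inU[of t' a'] topD by (auto simp: N_def)
      qed
      ultimately show "\<exists>U V. openin T U \<and> openin (subtopology (orbit_space G A actA) (orbit G actA ` A')) V \<and>
                t \<in> U \<and> Ob \<in> V \<and> U \<times> V \<subseteq> ?\<Phi> -` \<U> \<inter> topspace ?D"
        using UV a by blast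
    qed
  qed
qed


lemma gspace_prod:
  assumes A: "gspace G A a" and B: "gspace G B b"
  shows "gspace G (prod_topology A B) (prod_act a b)"
proof -
  have ca: "continuous_map (prod_topology (gtop G) A) A (\<lambda>(g, x). a g x)"
    and cb: "continuous_map (prod_topology (gtop G) B) B (\<lambda>(g, x). b g x)"
    using A B by (auto simp: gspace_def)
  have 1: "continuous_map (prod_topology (gtop G) (prod_topology A B)) A (\<lambda>(g, p). a g (fst p))"
  proof -
    have "continuous_map (prod_topology (gtop G) (prod_topology A B)) (prod_topology (gtop G) A) (\<lambda>(g, p). (g, fst p))"
      by (auto intro!: continuous_map_pairedI continuous_map_fst continuous_map_compose[OF continuous_map_snd continuous_map_fst, unfolded o_def] simp: case_prod_unfold)
    from continuous_map_compose[OF this ca] show ?thesis by (simp add: o_def case_prod_unfold)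
  qed
  have 2: "continuous_map (prod_topology (gtop G) (prod_topology A B)) B (\<lambda>(g, p). b g (snd p))"
  proof -
    have "continuous_map (prod_topology (gtop G) (prod_topology A B)) (prod_topology (gtop G) B) (\<lambda>(g, p). (g, snd p))"
      by (auto intro!: continuous_map_pairedI continuous_map_fst continuous_map_compose[OF continuous_map_snd continuous_map_snd, unfolded o_def] simp: case_prod_unfold)
    from continuous_map_compose[OF this cb] show ?thesis by (simp add: o_def case_prod_unfold)
  qed
  have "continuous_map (prod_topology (gtop G) (prod_topology A B)) (prod_topology A B) (\<lambda>(g, p). prod_act a b g p)"
    using continuous_map_pairedI[OF 1 2] by (simp add: prod_act_def case_prod_unfold)
  then show ?thesis
    using A B by (auto simp: gspace_def prod_act_def)
qed

lemma diag_G_orbit: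
  "diag_G (orbit G (prod_act aE aX) (e, x)) = orbit G (prod_act aE (prod_act aX aX)) (e, (x, x))"
  by (auto simp: diag_G_def orbit_def prod_act_def image_iff)

lemma homotopic_with_orbit_space_maps:
  assumes G: "topological_group G" and A: "gspace G A actA" and B: "gspace G B actB"
    and A': "openin A A'" and inv: "g_invariant G actA A'"
    and \<phi>: "continuous_map (prod_topology (top_of_set {0..1::real}) (subtopology A A')) B \<phi>"
    and eq: "\<And>t g a. t \<in> {0..1} \<Longrightarrow> g \<in> topspace (gtop G) \<Longrightarrow> a \<in> A' \<Longrightarrow>
                \<phi> (t, actA g a) = actB g (\<phi> (t, a))"
    and f: "\<And>a. a \<in> A' \<Longrightarrow> f (orbit G actA a) = orbit G actB (\<phi> (0, a))"
    and g: "\<And>a. a \<in> A' \<Longrightarrow> g (orbit G actA a) = orbit G actB (\<phi> (1, a))"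
  shows "homotopic_with (\<lambda>h. True) (subtopology (orbit_space G A actA) (orbit G actA ` A'))
           (orbit_space G B actB) f g"
proof -
  let ?S = "subtopology (orbit_space G A actA) (orbit G actA ` A')"
  let ?H = "\<lambda>(t, Ob). induced_orbit_map G actB (\<lambda>a. \<phi> (t, a)) Ob"
  have A'_sub: "A' \<subseteq> topspace A"
    using A' openin_subset by blast
  have H: "continuous_map (prod_topology (top_of_set {0..1}) ?S) (orbit_space G B actB) ?H"
    by (rule continuous_map_induced_orbit_map[OF G A B A' inv \<phi>]) (use eq in auto)
  have H_orbit: "?H (t, orbit G actA a) = orbit G actB (\<phi> (t, a))" if "t \<in> {0..1}" "a \<in> A'" for t a
    using induced_orbit_map_orbit_param[OF G A B A'_sub \<phi>] eq that by simp
  have "topspace ?S = orbit G actA ` A'"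
    using A'_sub by (auto simp: topspace_orbit_space[OF G A])
  then show ?thesis
    using H H_orbit f g by (subst homotopic_with) (auto intro!: exI[of _ ?H])
qed

section \<open>Path spaces and motion planners\<close>

lemma topspace_path_space: "topspace (path_space X) = paths X"
proof -
  have "paths X \<in> {{\<gamma> \<in> paths X. \<gamma> ` K \<subseteq> V} | K V. compactin (top_of_set {0..1}) K \<and> openin X V}"
    by (rule CollectI, rule exI[of _ "{}"], rule exI[of _ "topspace X"]) auto
  then show ?thesis unfolding path_space_def topology_generated_by_topspace by blast
qed

lemma openin_path_space_basic:
  "compactin (top_of_set {0..1}) K \<Longrightarrow> openin X V \<Longrightarrow> openin (path_space X) {\<gamma> \<in> paths X. \<gamma> ` K \<subseteq> V}"
  unfolding path_space_def by (rule topology_generated_by_Basis) blast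

lemma continuous_map_path_eval:
  assumes s: "continuous_map S (path_space X) s"
  shows "continuous_map (prod_topology (top_of_set {0..1::real}) S) X (\<lambda>(t,u). s u t)"
proof -
  have sp: "s u \<in> paths X" if "u \<in> topspace S" for u
    using continuous_map_image_subset_topspace[OF s] that topspace_path_space by blast
  have sc: "continuous_map (top_of_set {0..1}) X (s u)" if "u \<in> topspace S" for u
    using sp[OF that] by (simp add: paths_def)
  show ?thesis
    unfolding continuous_map_def
  proof (intro conjI allI impI)
    show "(\<lambda>(t, u). s u t) \<in> topspace (prod_topology (top_of_set {0..1}) S) \<rightarrow> topspace X"
      using sc by (auto simp: continuous_map_def Pi_iff)
  next
    fix V assume V: "openin X V"
    show "openin (prod_topology (top_of_set {0..1}) S)
            {x \<in> topspace (prod_topology (top_of_set {0..1}) S). (case x of (t, u) \<Rightarrow> s u t) \<in> V}"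
      unfolding openin_prod_topology_alt
    proof (intro allI impI)
      fix t u assume tu: "(t, u) \<in> {x \<in> topspace (prod_topology (top_of_set {0..1}) S). (case x of (t, u) \<Rightarrow> s u t) \<in> V}"
      then have t: "t \<in> {0..1}" and u: "u \<in> topspace S" and stV: "s u t \<in> V" by auto
      have "openin (top_of_set {0..1}) {x \<in> topspace (top_of_set {0..1::real}). s u x \<in> V}"
        using openin_continuous_map_preimage[OF sc[OF u] V] .
      then obtain e where e: "e > 0" "ball t e \<inter> {0..1} \<subseteq> {x \<in> {0..1}. s u x \<in> V}"
        using t stV unfolding openin_contains_ball by auto
      define K where "K = cball t (e/2) \<inter> {0..1::real}"
      have K: "compactin (top_of_set {0..1}) K"
        unfolding K_def compactin_subtopology by (auto intro: compact_Int_closed)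
      define U1 where "U1 = {0..1} \<inter> ball t (e/2)"
      define V1 where "V1 = {u \<in> topspace S. s u \<in> {\<gamma> \<in> paths X. \<gamma> ` K \<subseteq> V}}"
      have "openin (top_of_set {0..1}) U1" unfolding U1_def by auto
      moreover have "openin S V1"
        unfolding V1_def by (rule openin_continuous_map_preimage[OF s openin_path_space_basic[OF K V]])
      moreover have "t \<in> U1" using t e by (simp add: U1_def)
      moreover have "K \<subseteq> ball t e \<inter> {0..1}" using e by (auto simp: K_def)
      then have "u \<in> V1" using e u sp[OF u] by (auto simp: V1_def)
      moreover have "U1 \<times> V1 \<subseteq> {x \<in> topspace (prod_topology (top_of_set {0..1}) S). (case x of (t, u) \<Rightarrow> s u t) \<in> V}"
        by (auto simp: U1_def V1_def K_def)
      ultimately show "\<exists>U1 V1. openin (top_of_set {0..1}) U1 \<and> openin S V1 \<and> t \<in> U1 \<and> u \<in> V1 \<and>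
         U1 \<times> V1 \<subseteq> {x \<in> topspace (prod_topology (top_of_set {0..1}) S). (case x of (t, u) \<Rightarrow> s u t) \<in> V}"
        by blast
    qed
  qed
qed

lemma continuous_maps_planned_paths:
  fixes K :: "real \<times> 'x \<times> 'x \<Rightarrow> 'x \<times> 'x" and E :: "'e topology" and X :: "'x topology"
    and U :: "('x \<times> 'x) set"
  defines "P \<equiv> prod_topology (top_of_set {0..1::real}) (prod_topology E (subtopology (prod_topology X X) U))"
  assumes s: "continuous_map (subtopology (prod_topology X X) U) (path_space X) s"
    and K: "continuous_map (prod_topology (top_of_set {0..1}) (subtopology (prod_topology X X) U)) (prod_topology X X) K"
  shows "continuous_map P (prod_topology E (prod_topology X X)) (\<lambda>(t, e, u). (e, K (t, u)))"
    and "continuous_map P (prod_topology E (prod_topology X X)) (\<lambda>(t, e, u). (e, (s u 0, s u t)))"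
    and "continuous_map P (prod_topology E X) (\<lambda>(t, e, u). (e, s u 0))"
proof -
  have drop_e: "continuous_map P (prod_topology (top_of_set {0..1}) (subtopology (prod_topology X X) U))
                  (\<lambda>p. (f p, snd (snd p)))"
    if "continuous_map P (top_of_set {0..1}) f" for f
    using that unfolding P_def
    by (intro continuous_intros continuous_map_snd_of[of _ E _ snd, unfolded o_def] continuous_map_snd)
  have eval: "continuous_map P X (\<lambda>p. s (snd (snd p)) (f p))" if "continuous_map P (top_of_set {0..1}) f" for f
    using continuous_map_compose[OF drop_e[OF that] continuous_map_path_eval[OF s]] by (simp add: o_def)
  have e: "continuous_map P E (\<lambda>p. fst (snd p))"
    unfolding P_def
    by (intro continuous_map_fst_of[of _ E "subtopology (prod_topology X X) U" snd, unfolded o_def]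
        continuous_map_snd)
  have t: "continuous_map P (top_of_set {0..1}) fst" and t0: "continuous_map P (top_of_set {0..1}) (\<lambda>p. 0::real)"
    unfolding P_def by (simp_all add: continuous_map_fst)
  show "continuous_map P (prod_topology E (prod_topology X X)) (\<lambda>(t, e, u). (e, K (t, u)))"
    unfolding case_prod_unfold
    by (intro continuous_map_pairedI e continuous_map_compose[OF drop_e[OF t] K, unfolded o_def])
  show "continuous_map P (prod_topology E (prod_topology X X)) (\<lambda>(t, e, u). (e, (s u 0, s u t)))"
    unfolding case_prod_unfold by (intro continuous_map_pairedI e eval t t0)
  show "continuous_map P (prod_topology E X) (\<lambda>(t, e, u). (e, s u 0))"
    unfolding case_prod_unfold by (intro continuous_map_pairedI e eval t0)
qed

text \<open>On the image V of E \<times> U, the identity is homotopic, via the given homotopy from the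
  planner to the identity, to [e, u] \<mapsto> [e, (s u 0, s u 1)]; shrinking each planned path to its
  starting point deforms this into [e, u] \<mapsto> [e, (s u 0, s u 0)] = diag_G (F [e, u]).\<close>
lemma motion_planner_homotopy:
  fixes G :: "('g, 'm) tgroup_scheme" and E :: "'e topology" and X :: "'x topology"
    and aE :: "'g \<Rightarrow> 'e \<Rightarrow> 'e" and aX :: "'g \<Rightarrow> 'x \<Rightarrow> 'x"
  defines "W \<equiv> homotopy_orbit G E aE (prod_topology X X) (prod_act aX aX)"
    and "act \<equiv> prod_act aE (prod_act aX aX)"
  assumes G: "topological_group G" and E: "gspace G E aE" and X: "gspace G X aX"
    and U: "openin (prod_topology X X) U" and inv: "g_invariant G (prod_act aX aX) U"
    and pl: "G_motion_planner_on G X aX U"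
  obtains F where
    "continuous_map (subtopology W (orbit G act ` (topspace E \<times> U))) (homotopy_orbit G E aE X aX) F"
    "homotopic_with (\<lambda>h. True) (subtopology W (orbit G act ` (topspace E \<times> U))) W id (diag_G \<circ> F)"
proof -
  define A where "A = prod_topology E (prod_topology X X)"
  define A' where "A' = topspace E \<times> U"
  define S where "S = subtopology W (orbit G act ` A')"
  obtain s where s: "continuous_map (subtopology (prod_topology X X) U) (path_space X) s"
    and s_eq: "g_equivariant_on G U (prod_act aX aX) (path_act aX) s"
    and hom: "homotopic_with (\<lambda>h. g_equivariant_on G U (prod_act aX aX) (prod_act aX aX) h)
                (subtopology (prod_topology X X) U) (prod_topology X X) (path_ends \<circ> s) id"
    using pl unfolding G_motion_planner_on_def by blast
  obtain K where K: "continuous_map (prod_topology (top_of_set {0..1::real}) (subtopology (prod_topology X X) U)) (prod_topology X X) K"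
    and K0: "\<And>u. K (0, u) = path_ends (s u)" and K1: "\<And>u. K (1, u) = u"
    and K_eq: "\<And>t. t \<in> {0..1} \<Longrightarrow> g_equivariant_on G U (prod_act aX aX) (prod_act aX aX) (\<lambda>u. K (t, u))"
    using hom unfolding homotopic_with_def by auto
  have s_eq': "s (prod_act aX aX g u) r = aX g (s u r)"
    if "g \<in> topspace (gtop G)" "u \<in> U" "r \<in> {0..1}" for g u r
    using s_eq that by (simp add: g_equivariant_on_def path_act_def)
  have A: "gspace G A act" and A1: "gspace G (prod_topology E X) (prod_act aE aX)"
    unfolding A_def act_def by (intro gspace_prod E X)+
  have A': "openin A A'" "A' \<subseteq> topspace A"
    using U openin_subset[of A A'] by (auto simp: A_def A'_def openin_prod_Times_iff)
  have A'_inv: "g_invariant G act A'"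
    using inv gspace_act_in_topspace[OF E] by (auto simp: g_invariant_def A'_def act_def prod_act_def)
  have W_eq: "W = orbit_space G A act"
    by (simp add: W_def A_def act_def homotopy_orbit_def)
  have A'_top: "subtopology A A' = prod_topology E (subtopology (prod_topology X X) U)"
    unfolding A_def A'_def by (metis subtopology_Times subtopology_topspace)
  define \<phi>1 where "\<phi>1 = (\<lambda>(t::real, e::'e, u). (e, K (t, u)))"
  define \<phi>2 where "\<phi>2 = (\<lambda>(t::real, e::'e, u). (e, (s u 0, s u t)))"
  define \<phi>3 where "\<phi>3 = (\<lambda>(t::real, e::'e, u). (e, s u 0))"
  have \<phi>1: "continuous_map (prod_topology (top_of_set {0..1}) (subtopology A A')) A \<phi>1"
    and \<phi>2: "continuous_map (prod_topology (top_of_set {0..1}) (subtopology A A')) A \<phi>2"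
    and \<phi>3: "continuous_map (prod_topology (top_of_set {0..1}) (subtopology A A')) (prod_topology E X) \<phi>3"
    using continuous_maps_planned_paths[OF s K]
    unfolding A'_top unfolding A_def \<phi>1_def \<phi>2_def \<phi>3_def .
  have \<phi>_eq: "\<phi>1 (t, act g a) = act g (\<phi>1 (t, a))" "\<phi>2 (t, act g a) = act g (\<phi>2 (t, a))"
    "\<phi>3 (t, act g a) = prod_act aE aX g (\<phi>3 (t, a))"
    if "t \<in> {0..1}" "g \<in> topspace (gtop G)" "a \<in> A'" for t g a
  proof -
    obtain e u where a: "a = (e, u)" "u \<in> U"
      using \<open>a \<in> A'\<close> by (auto simp: A'_def)
    then have "K (t, prod_act aX aX g u) = prod_act aX aX g (K (t, u))"
      using K_eq[of t] that by (simp add: g_equivariant_on_def)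
    then show "\<phi>1 (t, act g a) = act g (\<phi>1 (t, a))" "\<phi>2 (t, act g a) = act g (\<phi>2 (t, a))"
      "\<phi>3 (t, act g a) = prod_act aE aX g (\<phi>3 (t, a))"
      using a that s_eq'[of g u] by (auto simp: \<phi>1_def \<phi>2_def \<phi>3_def act_def prod_act_def)
  qed
  define F where "F = induced_orbit_map G (prod_act aE aX) (\<lambda>a. \<phi>3 (0, a))"
  define M where "M = induced_orbit_map G act (\<lambda>a. \<phi>1 (0, a))"
  have F_orbit: "F (orbit G act a) = orbit G (prod_act aE aX) (\<phi>3 (0, a))" if "a \<in> A'" for a
    unfolding F_def using induced_orbit_map_orbit_param[OF G A A1 A'(2) \<phi>3] \<phi>_eq that by simp
  have M_orbit: "M (orbit G act a) = orbit G act (\<phi>1 (0, a))" if "a \<in> A'" for a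
    unfolding M_def using induced_orbit_map_orbit_param[OF G A A A'(2) \<phi>1] \<phi>_eq that by simp
  have "continuous_map S (homotopy_orbit G E aE X aX) F"
  proof -
    have "continuous_map (prod_topology (top_of_set {0..1}) S) (homotopy_orbit G E aE X aX)
            (\<lambda>(t, Ob). induced_orbit_map G (prod_act aE aX) (\<lambda>a. \<phi>3 (t, a)) Ob)"
      unfolding S_def W_eq homotopy_orbit_def
      by (rule continuous_map_induced_orbit_map[OF G A A1 A'(1) A'_inv \<phi>3]) (use \<phi>_eq in auto)
    from continuous_map_compose[OF continuous_map_Pair_const[of 0 "top_of_set {0..1}" S] this]
    show ?thesis
      by (simp add: F_def o_def)
  qed
  moreover have "homotopic_with (\<lambda>h. True) S W id (diag_G \<circ> F)"
  proof -
    have "homotopic_with (\<lambda>h. True) S W M id"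
      unfolding S_def W_eq
      by (rule homotopic_with_orbit_space_maps[OF G A A A'(1) A'_inv \<phi>1 \<phi>_eq(1)])
        (auto simp: M_orbit \<phi>1_def K1 A'_def)
    moreover have "homotopic_with (\<lambda>h. True) S W (diag_G \<circ> F) M"
      unfolding S_def W_eq
      by (rule homotopic_with_orbit_space_maps[OF G A A A'(1) A'_inv \<phi>2 \<phi>_eq(2)])
        (auto simp: F_orbit M_orbit \<phi>1_def \<phi>2_def \<phi>3_def K0 path_ends_def diag_G_orbit[of G aE aX, folded act_def] A'_def)
    ultimately show ?thesis
      by (meson homotopic_with_symD homotopic_with_trans)
  qed
  ultimately show thesis
    using that unfolding S_def A'_def by blast
qed

section \<open>Equivariant topological complexity\<close>

lemma equivariant_TC_le_imp_cover:
  fixes X :: "'x topology"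
  assumes "equivariant_TC G X a \<le> enat k"
  obtains m U where "m \<le> k"
    "\<And>i. i < m \<Longrightarrow> openin (prod_topology X X) (U i)"
    "\<And>i. i < m \<Longrightarrow> g_invariant G (prod_act a a) (U i)"
    "\<And>i. i < m \<Longrightarrow> G_motion_planner_on G X a (U i)"
    "(\<Union>i<m. U i) = topspace (prod_topology X X)"
proof -
  define S where "S = {k. \<exists>U :: nat \<Rightarrow> ('x \<times> 'x) set.
        (\<forall>i<k. openin (prod_topology X X) (U i) \<and> g_invariant G (prod_act a a) (U i) \<and>
               G_motion_planner_on G X a (U i)) \<and>
        (\<Union>i<k. U i) = topspace (prod_topology X X)}"
  have le: "Inf (enat ` S) \<le> enat k"
    using assms by (simp add: equivariant_TC_def S_def)
  then have "S \<noteq> {}"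
    by (auto simp: Inf_enat_def)
  then have "Inf (enat ` S) \<in> enat ` S"
    unfolding Inf_enat_def by (auto intro: LeastI)
  then obtain m where "m \<in> S" "m \<le> k"
    using le by auto
  then show thesis
    using that unfolding S_def by blast
qed

lemma openin_homotopy_orbit_image:
  assumes G: "topological_group G" and E: "gspace G E aE" and X: "gspace G X aX" and U: "openin X U"
  shows "openin (homotopy_orbit G E aE X aX) (orbit G (prod_act aE aX) ` (topspace E \<times> U))"
  unfolding homotopy_orbit_def
  using U by (intro openin_orbit_image[OF G gspace_prod[OF E X]]) (simp add: openin_prod_Times_iff)

lemma topspace_homotopy_orbit_subset:
  assumes G: "topological_group G" and E: "gspace G E aE" and X: "gspace G X aX"
    and cover: "(\<Union>i<m. U i) = topspace X"
  shows "topspace (homotopy_orbit G E aE X aX) \<subseteq> (\<Union>i<m. orbit G (prod_act aE aX) ` (topspace E \<times> U i))"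
proof
  fix x assume "x \<in> topspace (homotopy_orbit G E aE X aX)"
  then obtain e u where "e \<in> topspace E" "u \<in> topspace X" "x = orbit G (prod_act aE aX) (e, u)"
    by (auto simp: homotopy_orbit_def topspace_orbit_space[OF G gspace_prod[OF E X]])
  moreover obtain i where "i < m" "u \<in> U i"
    using cover \<open>u \<in> topspace X\<close> by blast
  ultimately show "x \<in> (\<Union>i<m. orbit G (prod_act aE aX) ` (topspace E \<times> U i))"
    by blast
qed

lemma class_zero_on_motion_planner_set:
  assumes G: "topological_group G" and E: "gspace G E aE" and X: "gspace G X aX"
    and U: "openin (prod_topology X X) U" "g_invariant G (prod_act aX aX) U" "G_motion_planner_on G X aX U"
    and z: "degreewise_cocycle (homotopy_orbit G E aE (prod_topology X X) (prod_act aX aX)) z"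
    and z_diag: "class_zero (homotopy_orbit G E aE X aX) (total_pullback diag_G z)"
  shows "class_zero (subtopology (homotopy_orbit G E aE (prod_topology X X) (prod_act aX aX))
                        (orbit G (prod_act aE (prod_act aX aX)) ` (topspace E \<times> U))) z"
  unfolding class_zero_def
  by (rule motion_planner_homotopy[OF G E X U])
    (use z z_diag in \<open>auto intro: is_coboundary_of_homotopic_factorization
       simp: degreewise_cocycle_def class_zero_def total_pullback_def\<close>)

theorem theorem5p15:
  fixes G :: "'g tgroup"
    and E :: "'e topology" and aE :: "'g \<Rightarrow> 'e \<Rightarrow> 'e"
    and X :: "'x topology" and aX :: "'g \<Rightarrow> 'x \<Rightarrow> 'x"
    and k :: nat
    and z :: "nat \<Rightarrow> (('e \<times> ('x \<times> 'x)) set, 'r::comm_ring_1) total_cochain"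
  assumes "topological_group G"
    and "compact_space (gtop G)" and "Hausdorff_space (gtop G)"
    and "universal_G_space G E aE"
    and "gspace G X aX" and "Hausdorff_space X"
    and "\<forall>i<k. total_cocycle (homotopy_orbit G E aE (prod_topology X X) (prod_act aX aX)) (z i)"
    and "\<forall>i<k. class_zero (homotopy_orbit G E aE X aX) (total_pullback diag_G (z i))"
    and "\<not> class_zero (homotopy_orbit G E aE (prod_topology X X) (prod_act aX aX))
                      (total_prod (map z [0..<k]))"
  shows "enat k < equivariant_TC G X aX"
proof (rule ccontr)
  assume "\<not> enat k < equivariant_TC G X aX"
  then obtain m U where "m \<le> k"
    and U: "\<And>i. i < m \<Longrightarrow> openin (prod_topology X X) (U i)"
      "\<And>i. i < m \<Longrightarrow> g_invariant G (prod_act aX aX) (U i)"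
      "\<And>i. i < m \<Longrightarrow> G_motion_planner_on G X aX (U i)"
    and cover: "(\<Union>i<m. U i) = topspace (prod_topology X X)"
    using equivariant_TC_le_imp_cover by (metis not_less)
  have E: "gspace G E aE"
    using assms(4) by (simp add: universal_G_space_def)
  have XX: "gspace G (prod_topology X X) (prod_act aX aX)"
    by (intro gspace_prod assms(5))
  have "class_zero (homotopy_orbit G E aE (prod_topology X X) (prod_act aX aX)) (total_prod (map z [0..<k]))"
  proof (rule class_zero_total_prod_of_open_cover)
    show "class_zero (subtopology (homotopy_orbit G E aE (prod_topology X X) (prod_act aX aX))
            (orbit G (prod_act aE (prod_act aX aX)) ` (topspace E \<times> U i))) (z i)" if "i < m" for i
      using that \<open>m \<le> k\<close> assms(7,8) U
      by (intro class_zero_on_motion_planner_set[OF assms(1) E assms(5)])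
        (simp_all add: total_cocycle_def degreewise_cocycle_def)
  qed (use \<open>m \<le> k\<close> assms(7) U(1) topspace_homotopy_orbit_subset[OF assms(1) E XX cover]
         in \<open>auto simp: total_cocycle_def degreewise_cocycle_def intro: openin_homotopy_orbit_image[OF assms(1) E XX]\<close>)
  then show False
    using assms(9) by simp
qed

end
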